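(* Let $X$ be a definable set in the ordered Fraenkel–Mostowski model $\mathbf{ZFA}(\mathcal{Q})$ of set theory with atoms. Then for any field $\mathcal{K}$ (without atoms) the vector space $\mathcal{K}^X$ has a definable basis.
   Context: $\mathcal{Q}=\langle\mathbb{Q},\le\rangle$ is the rationals with their natural order; its automorphisms are the order-preserving bijections. $\mathbf{ZFA}(\mathcal{Q})$ is the permutation model with atoms $\mathbb{Q}$ consisting of hereditarily finitely supported sets (a set is supported by finite $A_0\subseteq\mathbb{Q}$ if fixed by all automorphisms fixing $A_0$ pointwise). A set is definable if for some finite $A_0$ it is supported by $A_0$ and has finitely many orbits under automorphisms fixing $A_0$ pointwise. $\mathcal{K}^X$ is the vector space of finitely supported functions $X\to\mathcal{K}$. *)

theory Defs
  imports Complex_Main "HOL-Library.Function_Algebras"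
begin

definition aut :: "(rat \<Rightarrow> rat) \<Rightarrow> bool" where
  "aut \<pi> \<longleftrightarrow> bij \<pi> \<and> (\<forall>p q. p \<le> q \<longleftrightarrow> \<pi> p \<le> \<pi> q)"

definition fixing :: "rat set \<Rightarrow> (rat \<Rightarrow> rat) \<Rightarrow> bool" where
  "fixing A \<pi> \<longleftrightarrow> aut \<pi> \<and> (\<forall>a\<in>A. \<pi> a = a)"

text \<open>A universe of objects of ZFA(Q), abstractly: a type with an action of Aut(Q)
  in which every element is finitely supported (a nominal set over Q).\<close>
definition supports :: "((rat \<Rightarrow> rat) \<Rightarrow> 'x \<Rightarrow> 'x) \<Rightarrow> rat set \<Rightarrow> 'x \<Rightarrow> bool" where
  "supports act A x \<longleftrightarrow> (\<forall>\<pi>. fixing A \<pi> \<longrightarrow> act \<pi> x = x)"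

definition fm_universe :: "((rat \<Rightarrow> rat) \<Rightarrow> 'x \<Rightarrow> 'x) \<Rightarrow> bool" where
  "fm_universe act \<longleftrightarrow>
     (\<forall>x. act id x = x) \<and>
     (\<forall>\<pi> \<sigma> x. aut \<pi> \<longrightarrow> aut \<sigma> \<longrightarrow> act (\<pi> \<circ> \<sigma>) x = act \<pi> (act \<sigma> x)) \<and>
     (\<forall>x. \<exists>A. finite A \<and> supports act A x)"

definition supports_set :: "((rat \<Rightarrow> rat) \<Rightarrow> 'x \<Rightarrow> 'x) \<Rightarrow> rat set \<Rightarrow> 'x set \<Rightarrow> bool" where
  "supports_set act A S \<longleftrightarrow> (\<forall>\<pi>. fixing A \<pi> \<longrightarrow> act \<pi> ` S = S)"

definition orbit :: "((rat \<Rightarrow> rat) \<Rightarrow> 'x \<Rightarrow> 'x) \<Rightarrow> rat set \<Rightarrow> 'x \<Rightarrow> 'x set" where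
  "orbit act A x = {act \<pi> x | \<pi>. fixing A \<pi>}"

definition definable :: "((rat \<Rightarrow> rat) \<Rightarrow> 'x \<Rightarrow> 'x) \<Rightarrow> 'x set \<Rightarrow> bool" where
  "definable act S \<longleftrightarrow> (\<exists>A. finite A \<and> supports_set act A S \<and> finite (orbit act A ` S))"

text \<open>Functions X \<rightarrow> K are represented as functions on the whole type that vanish
  outside X. The action of \<pi> on such an f (viewed as its graph) is
  (\<pi>.f)(y) = f(\<pi>^-1 . y), with domain \<pi>.X.\<close>
definition fun_act :: "((rat \<Rightarrow> rat) \<Rightarrow> 'x \<Rightarrow> 'x) \<Rightarrow> (rat \<Rightarrow> rat) \<Rightarrow> ('x \<Rightarrow> 'k) \<Rightarrow> ('x \<Rightarrow> 'k)" where
  "fun_act act \<pi> f = f \<circ> act (inv \<pi>)"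

definition supports_fun :: "((rat \<Rightarrow> rat) \<Rightarrow> 'x \<Rightarrow> 'x) \<Rightarrow> 'x set \<Rightarrow> rat set \<Rightarrow> ('x \<Rightarrow> 'k) \<Rightarrow> bool" where
  "supports_fun act X A f \<longleftrightarrow>
     (\<forall>\<pi>. fixing A \<pi> \<longrightarrow> act \<pi> ` X = X \<and> (\<forall>y\<in>X. fun_act act \<pi> f y = f y))"

text \<open>K^X: the finitely supported functions X \<rightarrow> K.\<close>
definition fs_funs :: "((rat \<Rightarrow> rat) \<Rightarrow> 'x \<Rightarrow> 'x) \<Rightarrow> 'x set \<Rightarrow> ('x \<Rightarrow> 'k::zero) set" where
  "fs_funs act X = {f. (\<forall>x. x \<notin> X \<longrightarrow> f x = 0) \<and> (\<exists>A. finite A \<and> supports_fun act X A f)}"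

definition definable_funset :: "((rat \<Rightarrow> rat) \<Rightarrow> 'x \<Rightarrow> 'x) \<Rightarrow> 'x set \<Rightarrow> ('x \<Rightarrow> 'k) set \<Rightarrow> bool" where
  "definable_funset act X B \<longleftrightarrow>
     (\<exists>A. finite A \<and>
          (\<forall>\<pi>. fixing A \<pi> \<longrightarrow> act \<pi> ` X = X \<and> fun_act act \<pi> ` B = B) \<and>
          finite ((\<lambda>f. {fun_act act \<pi> f | \<pi>. fixing A \<pi>}) ` B))"

definition fscale :: "'k::field \<Rightarrow> ('x \<Rightarrow> 'k) \<Rightarrow> ('x \<Rightarrow> 'k)" where
  "fscale c f = (\<lambda>x. c * f x)"

end

theory Submission
  imports Defs "HOL-Library.Indicator_Function"
begin

(*
  Fix a finite A supporting X such that X has finitely many A-orbits. By the homogeneity of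
  (Q, <), X then has finitely many C-orbits for every finite C, and every finitely supported
  f : X -> K is constant on the C-orbits for a suitable finite C containing A; so K^X is
  spanned by orbit indicators. The basis consists of the indicators of the D-orbits of y for
  the basic pairs (D, y): D is finite, contains A, and every point of D outside A has a point
  of the least support of y in the cell of D directly below it, or at it.

  Spanning: a non-basic C-orbit indicator is the indicator of its (C - {c})-orbit, for an
  uncovered point c, minus indicators of C-orbits of smaller potential (the sum of the
  positions of the support points relative to C); induct on |C| and on the potential.
  Independence: the basic indicators with D inside C are at most as many as the C-orbits,
  since D is recovered from a representative y of maximal potential as A together with the
  points of C covered by the support of y. Hence they form a spanning set of the space of
  C-orbit indicators of size at most its dimension. Definability: the basis is invariant under
  automorphisms fixing A, and |D - A| <= |supp y| leaves only finitely many order patterns of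
  D relative to A and the support, hence finitely many A-orbits of basis vectors.
*)

section \<open>Automorphisms of the rationals\<close>

lemma aut_bij: "aut \<pi> \<Longrightarrow> bij \<pi>"
  unfolding aut_def by blast

lemma aut_inj: "aut \<pi> \<Longrightarrow> inj \<pi>"
  using aut_bij bij_is_inj by blast

lemma aut_le_iff: "aut \<pi> \<Longrightarrow> \<pi> p \<le> \<pi> q \<longleftrightarrow> p \<le> q"
  unfolding aut_def by blast

lemma aut_less_iff: assumes "aut \<pi>" shows "\<pi> p < \<pi> q \<longleftrightarrow> p < q"
  using aut_le_iff[OF assms, of q p] by linarith

lemma aut_eq_iff: "aut \<pi> \<Longrightarrow> \<pi> p = \<pi> q \<longleftrightarrow> p = q"
  using aut_inj by (simp add: inj_eq)

lemma aut_id [simp]: "aut id"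
  unfolding aut_def by simp

lemma aut_comp: "aut \<pi> \<Longrightarrow> aut \<sigma> \<Longrightarrow> aut (\<pi> \<circ> \<sigma>)"
  unfolding aut_def by (auto intro: bij_comp)

lemma aut_inv_apply [simp]: "aut \<pi> \<Longrightarrow> inv \<pi> (\<pi> x) = x"
  by (meson aut_inj inv_f_f)

lemma aut_apply_inv [simp]: "aut \<pi> \<Longrightarrow> \<pi> (inv \<pi> x) = x"
  by (meson aut_bij bij_inv_eq_iff)

lemma aut_inv: assumes "aut \<pi>" shows "aut (inv \<pi>)"
proof -
  have "inv \<pi> p \<le> inv \<pi> q \<longleftrightarrow> p \<le> q" for p q
    using aut_le_iff[OF assms, of "inv \<pi> p" "inv \<pi> q"] assms by simp
  moreover have "bij (inv \<pi>)"
    using assms aut_bij bij_imp_bij_inv by blast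
  ultimately show ?thesis
    unfolding aut_def by blast
qed

lemma aut_inv_inv [simp]: "aut \<pi> \<Longrightarrow> inv (inv \<pi>) = \<pi>"
  using aut_bij inv_inv_eq by blast

lemma aut_comp_inv [simp]: "aut \<pi> \<Longrightarrow> \<pi> \<circ> inv \<pi> = id"
  by auto

lemma aut_inv_comp [simp]: "aut \<pi> \<Longrightarrow> inv \<pi> \<circ> \<pi> = id"
  by auto

lemma fixing_aut: "fixing A \<pi> \<Longrightarrow> aut \<pi>"
  unfolding fixing_def by blast

lemma fixing_fixes: "fixing A \<pi> \<Longrightarrow> a \<in> A \<Longrightarrow> \<pi> a = a"
  unfolding fixing_def by blast

lemma fixing_image_eq: "fixing A \<pi> \<Longrightarrow> S \<subseteq> A \<Longrightarrow> \<pi> ` S = S"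
  unfolding fixing_def by force

lemma fixing_subset: "fixing B \<pi> \<Longrightarrow> A \<subseteq> B \<Longrightarrow> fixing A \<pi>"
  unfolding fixing_def by blast

lemma fixing_comp: "fixing A \<pi> \<Longrightarrow> fixing A \<sigma> \<Longrightarrow> fixing A (\<pi> \<circ> \<sigma>)"
  unfolding fixing_def by (auto intro: aut_comp)

lemma fixing_inv: "fixing A \<pi> \<Longrightarrow> fixing A (inv \<pi>)"
  unfolding fixing_def by (metis aut_inv aut_inv_apply)

lemma fixing_conj: "fixing A \<sigma> \<Longrightarrow> aut \<pi> \<Longrightarrow> fixing (\<pi> ` A) (\<pi> \<circ> \<sigma> \<circ> inv \<pi>)"
  unfolding fixing_def by (auto intro!: aut_comp aut_inv)

lemma fixing_less_iff: "fixing A \<pi> \<Longrightarrow> a \<in> A \<Longrightarrow> a < \<pi> t \<longleftrightarrow> a < t"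
  using aut_less_iff[OF fixing_aut, of A \<pi> a t] fixing_fixes[of A \<pi> a] by simp

lemma fixing_greater_iff: "fixing A \<pi> \<Longrightarrow> a \<in> A \<Longrightarrow> \<pi> t < a \<longleftrightarrow> t < a"
  using aut_less_iff[OF fixing_aut, of A \<pi> t a] fixing_fixes[of A \<pi> a] by simp

section \<open>Homogeneity of the rationals\<close>

lemma strict_mono_on_glue:
  fixes f :: "'a::linorder \<Rightarrow> 'b::order"
  assumes S: "strict_mono_on S f" and T: "strict_mono_on T f" and "c \<in> S" "c \<in> T"
    and below: "\<forall>x\<in>S. x \<le> c" and above: "\<forall>x\<in>T. c \<le> x"
  shows "strict_mono_on (S \<union> T) f"
proof (rule strict_mono_onI)
  fix x y assume x: "x \<in> S \<union> T" and y: "y \<in> S \<union> T" and xy: "x < y"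
  show "f x < f y"
  proof (cases "x \<in> S \<and> y \<in> S \<or> x \<in> T \<and> y \<in> T")
    case True
    then show ?thesis
      using xy strict_mono_onD[OF S] strict_mono_onD[OF T] by blast
  next
    case False
    have "\<not> (x \<in> T \<and> y \<in> S)"
      using below above xy by (meson leD order.trans)
    with False x y have xS: "x \<in> S" and yT: "y \<in> T"
      by auto
    have "c \<le> y"
      using above yT by blast
    then have "f c \<le> f y"
      using strict_mono_onD[OF T \<open>c \<in> T\<close> yT] by (auto simp: le_less)
    moreover have "x = c \<or> f x < f c"
      using strict_mono_onD[OF S xS \<open>c \<in> S\<close>] below xS by force
    ultimately show ?thesis
      using strict_mono_onD[OF T \<open>c \<in> T\<close> yT] xy by auto
  qed
qed

definition pl_shift :: "rat \<Rightarrow> rat \<Rightarrow> rat \<Rightarrow> rat \<Rightarrow> rat \<Rightarrow> rat" where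
  "pl_shift l r p q x =
     (if x \<le> l then x
      else if x \<le> p then l + (x - l) * ((q - l) / (p - l))
      else if x < r then q + (x - p) * ((r - q) / (r - p))
      else x)"

context
  fixes l r p q :: rat
  assumes lpr: "l < p" "p < r" and lqr: "l < q" "q < r"
begin

lemma pl_shift_at: "pl_shift l r p q p = q"
  using lpr by (simp add: pl_shift_def)

lemma pl_shift_outside: "x \<le> l \<or> r \<le> x \<Longrightarrow> pl_shift l r p q x = x"
  using lpr by (auto simp: pl_shift_def)

lemma pl_shift_strict_mono: "strict_mono (pl_shift l r p q)"
proof -
  define k1 where "k1 = (q - l) / (p - l)"
  define k2 where "k2 = (r - q) / (r - p)"
  have k: "0 < k1" "0 < k2" "l + (p - l) * k1 = q" "q + (r - p) * k2 = r"
    using lpr lqr by (simp_all add: k1_def k2_def)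
  have on1: "strict_mono_on {..l} (pl_shift l r p q)"
    by (intro strict_mono_onI) (simp add: pl_shift_def)
  have on2: "strict_mono_on {l..p} (pl_shift l r p q)"
  proof (rule strict_mono_onI)
    have "x \<in> {l..p} \<Longrightarrow> pl_shift l r p q x = l + (x - l) * k1" for x
      by (auto simp: pl_shift_def k1_def)
    then show "pl_shift l r p q x < pl_shift l r p q y"
      if "x \<in> {l..p}" "y \<in> {l..p}" "x < y" for x y
      using that k(1) by simp
  qed
  have on3: "strict_mono_on {p..r} (pl_shift l r p q)"
  proof (rule strict_mono_onI)
    have "x \<in> {p..r} \<Longrightarrow> pl_shift l r p q x = q + (x - p) * k2" for x
      using lpr k(3,4) by (auto simp: pl_shift_def k1_def k2_def)
    then show "pl_shift l r p q x < pl_shift l r p q y"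
      if "x \<in> {p..r}" "y \<in> {p..r}" "x < y" for x y
      using that k(2) by simp
  qed
  have on4: "strict_mono_on {r..} (pl_shift l r p q)"
    using lpr by (intro strict_mono_onI) (simp add: pl_shift_def)
  have "strict_mono_on ({..l} \<union> {l..p}) (pl_shift l r p q)"
    using lpr by (intro strict_mono_on_glue[OF on1 on2, where c = l]) auto
  then have "strict_mono_on (({..l} \<union> {l..p}) \<union> {p..r}) (pl_shift l r p q)"
    using lpr by (intro strict_mono_on_glue[OF _ on3, where c = p]) auto
  then have "strict_mono_on ((({..l} \<union> {l..p}) \<union> {p..r}) \<union> {r..}) (pl_shift l r p q)"
    using lpr by (intro strict_mono_on_glue[OF _ on4, where c = r]) auto
  moreover have "(({..l} \<union> {l..p}) \<union> {p..r}) \<union> {r..} = UNIV"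
    using lpr by auto
  ultimately show ?thesis
    by simp
qed

end

lemma pl_shift_inverse:
  assumes "l < p" "p < r" "l < q" "q < r"
  shows "pl_shift l r q p (pl_shift l r p q x) = x"
proof -
  consider "x \<le> l \<or> r \<le> x" | "l < x" "x \<le> p" | "p < x" "x < r"
    by force
  then show ?thesis
  proof cases
    case 1
    then show ?thesis using assms by (simp add: pl_shift_outside)
  next
    case 2
    define v where "v = l + (x - l) * ((q - l) / (p - l))"
    have v: "pl_shift l r p q x = v"
      using 2 by (simp add: pl_shift_def v_def)
    have "l < v" "v \<le> q"
      using 2 strict_monoD[OF pl_shift_strict_mono[OF assms], of l x] pl_shift_outside[OF assms, of l]
        v pl_shift_at[OF assms] strict_monoD[OF pl_shift_strict_mono[OF assms], of x p]
      by (auto simp: le_less)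
    moreover have "(v - l) * ((p - l) / (q - l)) = x - l"
      using assms by (simp add: v_def)
    ultimately show ?thesis
      using v by (simp add: pl_shift_def)
  next
    case 3
    define v where "v = q + (x - p) * ((r - q) / (r - p))"
    have v: "pl_shift l r p q x = v"
      using 3 assms by (simp add: pl_shift_def v_def)
    have "q < v" "v < r"
      using 3 strict_monoD[OF pl_shift_strict_mono[OF assms], of p x] pl_shift_at[OF assms]
        strict_monoD[OF pl_shift_strict_mono[OF assms], of x r] pl_shift_outside[OF assms, of r] v
      by auto
    moreover have "(v - q) * ((r - p) / (r - q)) = x - p"
      using assms by (simp add: v_def)
    ultimately show ?thesis
      using v assms by (simp add: pl_shift_def)
  qed
qed

lemma aut_pl_shift:
  assumes "l < p" "p < r" "l < q" "q < r"
  shows "aut (pl_shift l r p q)"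
proof -
  have "bij (pl_shift l r p q)"
    by (rule bij_betw_byWitness[where f' = "pl_shift l r q p"])
      (use pl_shift_inverse[OF assms] pl_shift_inverse[of l q r p] assms in auto)
  moreover have "strict_mono (pl_shift l r p q)"
    using pl_shift_strict_mono[OF assms] .
  ultimately show ?thesis
    unfolding aut_def by (metis linorder_not_less strict_mono_less)
qed

lemma exists_greater_same_cut:
  fixes z :: "'a::{dense_linorder, no_top}"
  assumes "finite F" "z \<notin> F"
  shows "\<exists>r. z < r \<and> r \<notin> F \<and> (\<forall>f\<in>F. f < z \<longleftrightarrow> f < r)"
proof -
  obtain m where m: "z < m" "\<forall>f\<in>F. z < f \<longrightarrow> m \<le> f"
  proof (cases "{f\<in>F. z < f} = {}")
    case True
    then show ?thesis using that gt_ex[of z] by blast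
  next
    case False
    then show ?thesis
      using that[of "Min {f\<in>F. z < f}"] assms(1) by simp
  qed
  obtain r where r: "z < r" "r < m"
    using dense[OF m(1)] by blast
  have "f < r \<longleftrightarrow> f < z" if "f \<in> F" for f
  proof -
    have "f \<noteq> z" "z < f \<longrightarrow> m \<le> f"
      using that assms(2) m(2) by auto
    then show ?thesis
      using r by (cases "z < f") auto
  qed
  moreover have "r \<notin> F"
    using m(2) r by (meson leD)
  ultimately show ?thesis
    using r(1) by blast
qed

lemma exists_less_same_cut:
  fixes z :: "'a::{dense_linorder, no_bot}"
  assumes "finite F" "z \<notin> F"
  shows "\<exists>r. r < z \<and> r \<notin> F \<and> (\<forall>f\<in>F. f < z \<longleftrightarrow> f < r)"
proof -
  obtain m where m: "m < z" "\<forall>f\<in>F. f < z \<longrightarrow> f \<le> m"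
  proof (cases "{f\<in>F. f < z} = {}")
    case True
    then show ?thesis using that lt_ex[of z] by blast
  next
    case False
    then show ?thesis
      using that[of "Max {f\<in>F. f < z}"] assms(1) by simp
  qed
  obtain r where r: "m < r" "r < z"
    using dense[OF m(1)] by blast
  have "f < r \<longleftrightarrow> f < z" if "f \<in> F" for f
  proof -
    have "f < z \<longrightarrow> f \<le> m"
      using that m(2) by auto
    then show ?thesis
      using r by (cases "f < z") auto
  qed
  moreover have "r \<notin> F"
    using m(2) r by (meson leD)
  ultimately show ?thesis
    using r(2) by blast
qed

lemma fixing_move_point:
  assumes F: "finite F" and pq: "p \<notin> F" "q \<notin> F" and cut: "\<forall>f\<in>F. f < p \<longleftrightarrow> f < q"
  shows "\<exists>\<pi>. fixing F \<pi> \<and> \<pi> p = q"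
proof -
  define L where "L = {f\<in>F. f < p}"
  define R where "R = {f\<in>F. p < f}"
  define l where "l = (if L = {} then min p q - 1 else Max L)"
  define r where "r = (if R = {} then max p q + 1 else Min R)"
  have fin: "finite L" "finite R"
    using F by (auto simp: L_def R_def)
  have l: "l < p" "l < q"
    using fin cut by (auto simp: l_def L_def)
  have r: "p < r" "q < r"
  proof -
    show "p < r"
      using fin by (auto simp: r_def R_def)
    have "q < f" if "f \<in> R" for f
    proof -
      have "p < f" "f \<noteq> q" "f < p \<longleftrightarrow> f < q"
        using that cut pq by (auto simp: R_def)
      then show ?thesis
        by (cases "f < q") auto
    qed
    then show "q < r"
      using fin by (auto simp: r_def)
  qed
  have "pl_shift l r p q f = f" if "f \<in> F" for f
  proof (rule pl_shift_outside[OF l(1) r(1) l(2) r(2)])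
    have "f \<noteq> p"
      using that pq by blast
    then have "f < p \<or> p < f"
      by auto
    then show "f \<le> l \<or> r \<le> f"
      using that fin by (auto simp: l_def r_def L_def R_def)
  qed
  then show ?thesis
    using aut_pl_shift[OF l(1) r(1) l(2) r(2)] pl_shift_at[OF l(1) r(1) l(2) r(2)]
    by (auto simp: fixing_def)
qed

lemma aut_extends_strict_mono:
  assumes "finite F" "\<forall>x\<in>F. \<forall>y\<in>F. x < y \<longrightarrow> g x < g y"
  shows "\<exists>\<pi>. aut \<pi> \<and> (\<forall>x\<in>F. \<pi> x = g x)"
  using assms
proof (induction F rule: finite_induct)
  case empty
  then show ?case using aut_id by blast
next
  case (insert m F)
  then obtain \<pi> where \<pi>: "aut \<pi>" "\<forall>x\<in>F. \<pi> x = g x"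
    by (meson insert_iff)
  have less_iff: "x < m \<longleftrightarrow> g x < g m" "m < x \<longleftrightarrow> g m < g x" if "x \<in> F" for x
  proof -
    have "x \<noteq> m" "x < m \<longrightarrow> g x < g m" "m < x \<longrightarrow> g m < g x"
      using that insert.prems(1) insert.hyps(2) by auto
    then show "x < m \<longleftrightarrow> g x < g m" "m < x \<longleftrightarrow> g m < g x"
      by (cases "x < m"; auto)+
  qed
  have "g x < \<pi> m \<longleftrightarrow> g x < g m" if "x \<in> F" for x
    using aut_less_iff[OF \<pi>(1), of x m] \<pi>(2) less_iff(1)[OF that] that by simp
  then have cut: "\<forall>f\<in>g ` F. f < \<pi> m \<longleftrightarrow> f < g m"
    by blast
  have "\<pi> m \<noteq> g x" "g m \<noteq> g x" if "x \<in> F" for x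
    using that insert.hyps(2) \<pi> aut_eq_iff[OF \<pi>(1), of m x] less_iff[OF that] by auto
  then have "\<pi> m \<notin> g ` F" "g m \<notin> g ` F"
    by auto
  then obtain \<sigma> where \<sigma>: "fixing (g ` F) \<sigma>" "\<sigma> (\<pi> m) = g m"
    using fixing_move_point[OF _ _ _ cut] insert.hyps(1) by auto
  have "aut (\<sigma> \<circ> \<pi>)"
    using \<sigma>(1) \<pi>(1) by (auto intro: aut_comp fixing_aut)
  moreover have "(\<sigma> \<circ> \<pi>) x = g x" if "x \<in> insert m F" for x
    using that \<sigma>(2) \<pi>(2) fixing_fixes[OF \<sigma>(1)] by auto
  ultimately show ?case
    by blast
qed

lemma fixing_extends:
  assumes "finite C" "finite S" "aut \<pi>"
    and same_cut: "\<forall>t\<in>S. \<forall>c\<in>C. (t < c \<longleftrightarrow> \<pi> t < c) \<and> (c < t \<longleftrightarrow> c < \<pi> t)"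
  shows "\<exists>\<rho>. fixing C \<rho> \<and> (\<forall>t\<in>S. \<rho> t = \<pi> t)"
proof -
  define g where "g x = (if x \<in> C then x else \<pi> x)" for x
  have "\<pi> t = t" if "t \<in> S" "t \<in> C" for t
  proof -
    have "\<not> \<pi> t < t" "\<not> t < \<pi> t"
      using same_cut that by auto
    then show ?thesis
      by (meson linorder_neqE)
  qed
  then have g_S: "g t = \<pi> t" if "t \<in> S" for t
    using that by (auto simp: g_def)
  have "g x < g y" if xy: "x \<in> C \<union> S" "y \<in> C \<union> S" "x < y" for x y
  proof -
    consider "x \<in> C" "y \<in> C" | "x \<in> C" "y \<notin> C" "y \<in> S" | "x \<notin> C" "x \<in> S" "y \<in> C"
      | "x \<notin> C" "y \<notin> C"
      using xy(1,2) by blast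
    then show ?thesis
    proof cases
      case 1
      then show ?thesis using xy(3) by (simp add: g_def)
    next
      case 2
      then have "x < \<pi> y" using same_cut xy(3) by blast
      then show ?thesis using 2 by (simp add: g_def)
    next
      case 3
      then have "\<pi> x < y" using same_cut xy(3) by blast
      then show ?thesis using 3 by (simp add: g_def)
    next
      case 4
      then show ?thesis using xy(3) aut_less_iff[OF assms(3)] by (simp add: g_def)
    qed
  qed
  then obtain \<rho> where \<rho>: "aut \<rho>" "\<forall>x\<in>C \<union> S. \<rho> x = g x"
    using aut_extends_strict_mono[of "C \<union> S" g] assms(1,2) by blast
  then show ?thesis
    using g_S by (intro exI[of _ \<rho>]) (auto simp: fixing_def g_def)
qed

lemma exists_same_cut_beyond:
  fixes p p' :: "'a::{dense_linorder, no_top, no_bot}"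
  assumes F: "finite F" and "p \<notin> F" "p' \<notin> F" and cut: "\<forall>f\<in>F. f < p \<longleftrightarrow> f < p'"
  obtains r where "r \<notin> F" "r \<noteq> p" "r \<noteq> p'" "\<forall>f\<in>F. f < p \<longleftrightarrow> f < r"
    "p < r \<longleftrightarrow> upward" "r < p \<longleftrightarrow> r < p'"
proof (cases upward)
  case True
  have "max p p' \<notin> F"
    using assms by (simp add: max_def)
  then obtain r where r: "max p p' < r" "r \<notin> F" "\<forall>f\<in>F. f < max p p' \<longleftrightarrow> f < r"
    using exists_greater_same_cut[OF F] by blast
  moreover have "\<forall>f\<in>F. f < max p p' \<longleftrightarrow> f < p"
    using cut by (auto simp: max_def)
  ultimately show ?thesis
    using True by (intro that) auto
next
  case False
  have "min p p' \<notin> F"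
    using assms by (simp add: min_def)
  then obtain r where r: "r < min p p'" "r \<notin> F" "\<forall>f\<in>F. f < min p p' \<longleftrightarrow> f < r"
    using exists_less_same_cut[OF F] by blast
  moreover have "\<forall>f\<in>F. f < min p p' \<longleftrightarrow> f < p"
    using cut by (auto simp: min_def)
  ultimately show ?thesis
    using False by (intro that) auto
qed

section \<open>Finitely supported actions\<close>

locale fm_action =
  fixes act :: "(rat \<Rightarrow> rat) \<Rightarrow> 'x \<Rightarrow> 'x"
  assumes fm_universe: "fm_universe act"
begin

lemma act_id [simp]: "act id x = x"
  using fm_universe unfolding fm_universe_def by blast

lemma act_comp: "aut \<pi> \<Longrightarrow> aut \<sigma> \<Longrightarrow> act (\<pi> \<circ> \<sigma>) x = act \<pi> (act \<sigma> x)"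
  using fm_universe unfolding fm_universe_def by blast

lemma finite_support_exists: "\<exists>A. finite A \<and> supports act A x"
  using fm_universe unfolding fm_universe_def by blast

lemma act_inv_act [simp]: "aut \<pi> \<Longrightarrow> act (inv \<pi>) (act \<pi> x) = x"
  using act_comp[OF aut_inv, of \<pi> \<pi> x] by simp

lemma act_act_inv [simp]: "aut \<pi> \<Longrightarrow> act \<pi> (act (inv \<pi>) x) = x"
  using act_comp[OF _ aut_inv, of \<pi> \<pi> x] by simp

lemma supports_agree:
  assumes "supports act S x" "aut \<pi>" "aut \<sigma>" "\<forall>s\<in>S. \<pi> s = \<sigma> s"
  shows "act \<pi> x = act \<sigma> x"
proof -
  have "fixing S (inv \<sigma> \<circ> \<pi>)"
    using assms by (auto simp: fixing_def intro!: aut_comp aut_inv)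
  then have "act (inv \<sigma> \<circ> \<pi>) x = x"
    using assms(1) by (simp add: supports_def)
  then have "act (inv \<sigma>) (act \<pi> x) = x"
    using assms(2,3) by (simp add: act_comp aut_inv)
  then have "act \<sigma> (act (inv \<sigma>) (act \<pi> x)) = act \<sigma> x"
    by simp
  then show ?thesis
    using assms(3) by simp
qed

lemma supports_act:
  assumes "supports act S x" "aut \<pi>"
  shows "supports act (\<pi> ` S) (act \<pi> x)"
  unfolding supports_def
proof (intro allI impI)
  fix \<tau> assume \<tau>: "fixing (\<pi> ` S) \<tau>"
  then have "act (\<tau> \<circ> \<pi>) x = act \<pi> x"
    using assms by (intro supports_agree) (auto simp: fixing_def intro: aut_comp)
  then show "act \<tau> (act \<pi> x) = act \<pi> x"
    using \<tau> assms by (simp add: act_comp fixing_aut)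
qed

lemma supports_fixing_image:
  assumes "supports act S x" "fixing T \<sigma>" "supports act T x"
  shows "supports act (\<sigma> ` S) x"
  using supports_act[OF assms(1) fixing_aut[OF assms(2)]] assms(2,3)
  by (simp add: supports_def)

lemma supports_move_point:
  assumes "finite S" "supports act S x" "supports act (insert q (S - {p})) x"
    and "q \<notin> S" "q' \<notin> S" "\<forall>f\<in>S. f < q \<longleftrightarrow> f < q'"
  shows "supports act (insert q' (S - {p})) x"
proof -
  obtain \<sigma> where \<sigma>: "fixing S \<sigma>" "\<sigma> q = q'"
    using fixing_move_point assms(1,4-6) by blast
  then have "\<sigma> ` insert q (S - {p}) = insert q' (S - {p})"
    using fixing_image_eq[OF \<sigma>(1), of "S - {p}"] by auto
  then show ?thesis
    using supports_fixing_image[OF assms(3) \<sigma>(1) assms(2)] by simp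
qed

text \<open>An arbitrary \<open>\<pi>\<close> fixing \<open>S - {p}\<close> is realised on \<open>S\<close> by an automorphism fixing
  \<open>S - {p}\<close> together with a substitute \<open>r\<close> for \<open>p\<close> that lies beyond both \<open>p\<close> and \<open>\<pi> p\<close>.\<close>
lemma supports_remove_point:
  assumes S: "finite S" "p \<in> S" "supports act S x"
    and q: "q \<notin> S" "\<forall>f\<in>S - {p}. f < p \<longleftrightarrow> f < q" "supports act (insert q (S - {p})) x"
  shows "supports act (S - {p}) x"
  unfolding supports_def
proof (intro allI impI)
  fix \<pi> assume \<pi>: "fixing (S - {p}) \<pi>"
  define S0 where "S0 = S - {p}"
  have S0: "finite S0" "p \<notin> S0" "S = insert p S0"
    using S by (auto simp: S0_def)
  have "\<pi> p \<noteq> f" if "f \<in> S0" for f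
    using that S0(2) fixing_fixes[OF \<pi>, of f] aut_eq_iff[OF fixing_aut[OF \<pi>], of p f]
    unfolding S0_def by auto
  moreover have "\<forall>f\<in>S0. f < p \<longleftrightarrow> f < \<pi> p"
    using fixing_less_iff[OF \<pi>] unfolding S0_def by blast
  ultimately have p': "\<pi> p \<notin> S0" "\<forall>f\<in>S0. f < p \<longleftrightarrow> f < \<pi> p"
    by blast+
  obtain r where r: "r \<notin> S0" "r \<noteq> p" "r \<noteq> \<pi> p" "\<forall>f\<in>S0. f < p \<longleftrightarrow> f < r"
    "p < r \<longleftrightarrow> p < q" "r < p \<longleftrightarrow> r < \<pi> p"
    by (rule exists_same_cut_beyond[OF S0(1,2) p'])
  have "\<forall>f\<in>S. f < q \<longleftrightarrow> f < r"
    using q(2) r(4,5) unfolding S0_def[symmetric] S0(3) by auto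
  moreover have "r \<notin> S"
    using r(1,2) S0(3) by auto
  ultimately have "supports act (insert r S0) x"
    using supports_move_point[OF S(1,3) q(3) q(1)] unfolding S0_def by blast
  moreover obtain \<tau> where \<tau>: "fixing (insert r S0) \<tau>" "\<tau> p = \<pi> p"
    using fixing_move_point[of "insert r S0" p "\<pi> p"] S0 p' r by auto
  ultimately have "act \<tau> x = x"
    by (simp add: supports_def)
  moreover have "\<forall>s\<in>S. \<pi> s = \<tau> s"
    using fixing_fixes[OF \<pi>[folded S0_def]] fixing_fixes[OF \<tau>(1)] \<tau>(2) S0(3) by auto
  then have "act \<pi> x = act \<tau> x"
    using S(3) \<pi> \<tau> by (intro supports_agree) (auto intro: fixing_aut)
  ultimately show "act \<pi> x = x"
    by simp
qed

lemma supports_Int: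
  assumes "finite S1" "finite S2" "supports act S1 x" "supports act S2 x"
  shows "supports act (S1 \<inter> S2) x"
  using assms
proof (induction "card (S1 - S2)" arbitrary: S1 rule: less_induct)
  case less
  show ?case
  proof (cases "S1 \<subseteq> S2")
    case True
    then show ?thesis using less.prems by (simp add: Int_absorb2)
  next
    case False
    then obtain p where p: "p \<in> S1" "p \<notin> S2" by blast
    define S0 where "S0 = S1 - {p}"
    have fin: "finite (S0 \<union> S2)" and p_notin: "p \<notin> S0 \<union> S2"
      using less.prems p by (auto simp: S0_def)
    obtain q where q: "p < q" "q \<notin> S0 \<union> S2" "\<forall>f\<in>S0 \<union> S2. f < p \<longleftrightarrow> f < q"
      using exists_greater_same_cut[OF fin p_notin] by blast
    then have "q \<notin> S1"
      by (auto simp: S0_def)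
    obtain \<sigma> where \<sigma>: "fixing (S0 \<union> S2) \<sigma>" "\<sigma> p = q"
      using fixing_move_point[OF fin p_notin q(2,3)] by blast
    have "\<sigma> ` S0 = S0"
      using fixing_image_eq[OF \<sigma>(1)] by blast
    moreover have "S1 = insert p S0"
      using p(1) by (auto simp: S0_def)
    ultimately have "\<sigma> ` S1 = insert q S0"
      using \<sigma>(2) by simp
    then have "supports act (insert q S0) x"
      using supports_fixing_image[OF less.prems(3) fixing_subset[OF \<sigma>(1)] less.prems(4)] by simp
    then have "supports act S0 x"
      unfolding S0_def using supports_remove_point[OF less.prems(1) p(1) less.prems(3) \<open>q \<notin> S1\<close>] q
      by (auto simp: S0_def)
    moreover have "card (S0 - S2) < card (S1 - S2)"
      using p less.prems(1) by (intro psubset_card_mono) (auto simp: S0_def)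
    ultimately have "supports act (S0 \<inter> S2) x"
      using less.hyps[of S0] less.prems by (auto simp: S0_def)
    moreover have "S0 \<inter> S2 = S1 \<inter> S2"
      using p by (auto simp: S0_def)
    ultimately show ?thesis by simp
  qed
qed

definition supp :: "'x \<Rightarrow> rat set" where
  "supp x = \<Inter>{S. finite S \<and> supports act S x}"

lemma least_support_exists:
  "\<exists>S0. finite S0 \<and> supports act S0 x \<and> (\<forall>S. finite S \<and> supports act S x \<longrightarrow> S0 \<subseteq> S)"
proof -
  obtain A where A: "finite A" "supports act A x"
    using finite_support_exists by blast
  obtain S0 where S0: "finite S0" "supports act S0 x"
    "\<And>S. finite S \<and> supports act S x \<Longrightarrow> card S0 \<le> card S"
    using ex_has_least_nat[of "\<lambda>S. finite S \<and> supports act S x" A card] A by blast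
  have "S0 \<subseteq> S" if "finite S" "supports act S x" for S
  proof -
    have "card S0 \<le> card (S0 \<inter> S)"
      using S0(3)[of "S0 \<inter> S"] supports_Int[OF S0(1) that(1) S0(2) that(2)] S0(1) by simp
    then have "S0 \<inter> S = S0"
      using S0(1) by (meson Int_lower1 card_seteq finite_Int)
    then show ?thesis by blast
  qed
  then show ?thesis
    using S0 by blast
qed

lemma supp_eq_least_support:
  obtains "finite (supp x)" "supports act (supp x) x"
proof -
  obtain S0 where "finite S0" "supports act S0 x" "\<forall>S. finite S \<and> supports act S x \<longrightarrow> S0 \<subseteq> S"
    using least_support_exists by blast
  moreover from this have "supp x = S0"
    unfolding supp_def by blast
  ultimately show thesis
    using that by simp
qed

lemma finite_supp [simp]: "finite (supp x)"
  using supp_eq_least_support by blast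

lemma supp_supports: "supports act (supp x) x"
  using supp_eq_least_support by blast

lemma supp_least: "finite S \<Longrightarrow> supports act S x \<Longrightarrow> supp x \<subseteq> S"
  unfolding supp_def by blast

lemma supp_act:
  assumes "aut \<pi>"
  shows "supp (act \<pi> x) = \<pi> ` supp x"
proof
  show "supp (act \<pi> x) \<subseteq> \<pi> ` supp x"
    using supp_least supports_act[OF supp_supports assms] by simp
  have "supp x \<subseteq> inv \<pi> ` supp (act \<pi> x)"
    using supp_least[of "inv \<pi> ` supp (act \<pi> x)" x]
      supports_act[OF supp_supports aut_inv[OF assms], of "act \<pi> x"] assms by simp
  then show "\<pi> ` supp x \<subseteq> supp (act \<pi> x)"
    using image_mono[of _ _ \<pi>] assms by (fastforce simp: image_comp)
qed

lemma supp_agree: "aut \<pi> \<Longrightarrow> aut \<sigma> \<Longrightarrow> \<forall>s\<in>supp x. \<pi> s = \<sigma> s \<Longrightarrow> act \<pi> x = act \<sigma> x"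
  using supports_agree supp_supports by blast

lemma orbit_refl: "y \<in> orbit act C y"
  unfolding orbit_def by (auto simp: fixing_def intro!: exI[of _ id])

lemma orbit_memI: "fixing C \<pi> \<Longrightarrow> act \<pi> y \<in> orbit act C y"
  unfolding orbit_def by blast

lemma orbit_eq:
  assumes "z \<in> orbit act C y"
  shows "orbit act C z = orbit act C y"
proof -
  obtain \<pi> where \<pi>: "fixing C \<pi>" "z = act \<pi> y"
    using assms unfolding orbit_def by blast
  have "act \<sigma> z \<in> orbit act C y" if "fixing C \<sigma>" for \<sigma>
    using orbit_memI[OF fixing_comp[OF that \<pi>(1)]] that \<pi> by (simp add: act_comp fixing_aut)
  moreover have "act \<sigma> y \<in> orbit act C z" if "fixing C \<sigma>" for \<sigma>
    using orbit_memI[OF fixing_comp[OF that fixing_inv[OF \<pi>(1)]], of z] that \<pi>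
    by (simp add: act_comp fixing_aut aut_inv)
  ultimately show ?thesis
    unfolding orbit_def by blast
qed

lemma disjoint_orbits: "disjoint (orbit act C ` Y)"
proof (rule disjointI)
  fix O1 O2 assume "O1 \<in> orbit act C ` Y" "O2 \<in> orbit act C ` Y" "O1 \<noteq> O2"
  then show "O1 \<inter> O2 = {}"
    using orbit_eq by blast
qed

lemma orbit_antimono: "C \<subseteq> D \<Longrightarrow> orbit act D y \<subseteq> orbit act C y"
  unfolding orbit_def using fixing_subset by blast

lemma orbit_act:
  assumes "aut \<pi>"
  shows "act \<pi> ` orbit act C y = orbit act (\<pi> ` C) (act \<pi> y)"
proof
  show "act \<pi> ` orbit act C y \<subseteq> orbit act (\<pi> ` C) (act \<pi> y)"
  proof
    fix w assume "w \<in> act \<pi> ` orbit act C y"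
    then obtain \<sigma> where \<sigma>: "fixing C \<sigma>" "w = act \<pi> (act \<sigma> y)"
      unfolding orbit_def by blast
    then have "w = act (\<pi> \<circ> \<sigma> \<circ> inv \<pi>) (act \<pi> y)"
      using assms by (simp add: act_comp aut_comp aut_inv fixing_aut)
    then show "w \<in> orbit act (\<pi> ` C) (act \<pi> y)"
      using orbit_memI[OF fixing_conj[OF \<sigma>(1) assms]] by simp
  qed
  show "orbit act (\<pi> ` C) (act \<pi> y) \<subseteq> act \<pi> ` orbit act C y"
  proof
    fix w assume "w \<in> orbit act (\<pi> ` C) (act \<pi> y)"
    then obtain \<tau> where \<tau>: "fixing (\<pi> ` C) \<tau>" "w = act \<tau> (act \<pi> y)"
      unfolding orbit_def by blast
    have "fixing C (inv \<pi> \<circ> \<tau> \<circ> \<pi>)"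
      using fixing_conj[OF \<tau>(1) aut_inv[OF assms]] assms by (simp add: image_comp)
    moreover have "w = act \<pi> (act (inv \<pi> \<circ> \<tau> \<circ> \<pi>) y)"
      using \<tau> assms by (simp add: act_comp aut_comp aut_inv fixing_aut)
    ultimately show "w \<in> act \<pi> ` orbit act C y"
      using orbit_memI by blast
  qed
qed

lemma orbit_act_fixing:
  assumes "fixing C \<pi>"
  shows "act \<pi> ` orbit act C y = orbit act C y"
  using orbit_act[OF fixing_aut[OF assms]] fixing_image_eq[OF assms subset_refl]
    orbit_eq[OF orbit_memI[OF assms]] by simp

end

lemma finite_image_factor:
  assumes "finite (g ` Y)" and factor: "\<And>y1 y2. y1 \<in> Y \<Longrightarrow> y2 \<in> Y \<Longrightarrow> g y1 = g y2 \<Longrightarrow> f y1 = f y2"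
  shows "finite (f ` Y)" "card (f ` Y) \<le> card (g ` Y)"
proof -
  have "f (inv_into Y g (g y)) = f y" if "y \<in> Y" for y
    using factor[OF inv_into_into[of "g y" g Y] that] f_inv_into_f[of "g y" g Y] that by simp
  then have "f ` Y = (\<lambda>k. f (inv_into Y g k)) ` g ` Y"
    unfolding image_image by (intro image_cong) simp_all
  then show "finite (f ` Y)" "card (f ` Y) \<le> card (g ` Y)"
    using assms(1) card_image_le by simp_all
qed

definition cut_pos :: "rat set \<Rightarrow> rat \<Rightarrow> rat set \<times> rat set" where
  "cut_pos C t = ({c\<in>C. c < t}, {c\<in>C. c \<le> t})"

lemma cut_pos_eqD:
  assumes "cut_pos C t = cut_pos C t'" "c \<in> C"
  shows "t < c \<longleftrightarrow> t' < c" "c < t \<longleftrightarrow> c < t'"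
proof -
  have "{c\<in>C. c < t} = {c\<in>C. c < t'}" "{c\<in>C. c \<le> t} = {c\<in>C. c \<le> t'}"
    using assms(1) unfolding cut_pos_def by simp_all
  then have "c < t \<longleftrightarrow> c < t'" "c \<le> t \<longleftrightarrow> c \<le> t'"
    using assms(2) by blast+
  then show "t < c \<longleftrightarrow> t' < c" "c < t \<longleftrightarrow> c < t'"
    by (simp_all only: not_le[symmetric])
qed

section \<open>Definable sets\<close>

locale definable_set = fm_action act for act :: "(rat \<Rightarrow> rat) \<Rightarrow> 'x \<Rightarrow> 'x" +
  fixes X :: "'x set" and A :: "rat set"
  assumes finite_A: "finite A" and supports_X: "supports_set act A X"
    and finite_A_orbits: "finite (orbit act A ` X)"
begin

lemma act_image_X: "A \<subseteq> C \<Longrightarrow> fixing C \<pi> \<Longrightarrow> act \<pi> ` X = X"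
  using supports_X fixing_subset unfolding supports_set_def by blast

lemma act_mem_X: "A \<subseteq> C \<Longrightarrow> fixing C \<pi> \<Longrightarrow> y \<in> X \<Longrightarrow> act \<pi> y \<in> X"
  using act_image_X by blast

lemma orbit_subset_X: "A \<subseteq> C \<Longrightarrow> y \<in> X \<Longrightarrow> orbit act C y \<subseteq> X"
  unfolding orbit_def using act_mem_X by blast

definition orbit_rep :: "'x set \<Rightarrow> 'x" where
  "orbit_rep Ob = (SOME x. x \<in> X \<and> orbit act A x = Ob)"

lemma orbit_repE:
  assumes "y \<in> X"
  obtains \<pi> where "fixing A \<pi>" "act \<pi> (orbit_rep (orbit act A y)) = y"
proof -
  define r where "r = orbit_rep (orbit act A y)"
  have "\<exists>x. x \<in> X \<and> orbit act A x = orbit act A y"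
    using assms by blast
  then have "y \<in> orbit act A r"
    unfolding orbit_rep_def r_def by (rule someI2_ex) (use orbit_refl in blast)
  then obtain \<pi> where "fixing A \<pi>" "act \<pi> r = y"
    unfolding orbit_def by blast
  then show thesis
    using that unfolding r_def by blast
qed

text \<open>The \<open>C\<close>-orbit of \<open>y = \<pi> x\<close>, where \<open>x\<close> is the chosen representative of the \<open>A\<close>-orbit
  of \<open>y\<close>, is determined by the positions of the points \<open>\<pi> t\<close>, \<open>t \<in> supp x\<close>, relative to \<open>C\<close>.\<close>
definition orbit_key :: "rat set \<Rightarrow> 'x \<Rightarrow> 'x set \<times> (rat \<times> rat set \<times> rat set) set set" where
  "orbit_key C y =
     (orbit act A y,
      {(\<lambda>t. (t, cut_pos C (\<pi> t))) ` supp (orbit_rep (orbit act A y)) | \<pi>.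
         fixing A \<pi> \<and> act \<pi> (orbit_rep (orbit act A y)) = y})"

lemma finite_orbit_keys:
  assumes "finite C"
  shows "finite (orbit_key C ` X)"
proof -
  define K where "K = Sigma (orbit act A ` X) (\<lambda>Ob. Pow (Pow (supp (orbit_rep Ob) \<times> (Pow C \<times> Pow C))))"
  have "orbit_key C y \<in> K" if "y \<in> X" for y
  proof -
    define S where "S = supp (orbit_rep (orbit act A y))"
    have "cut_pos C u \<in> Pow C \<times> Pow C" for u
      unfolding cut_pos_def by auto
    then have graph: "(\<lambda>t. (t, cut_pos C (\<pi> t))) ` S \<in> Pow (S \<times> (Pow C \<times> Pow C))" for \<pi>
      by blast
    have "snd (orbit_key C y) \<in> Pow (Pow (S \<times> (Pow C \<times> Pow C)))"
      unfolding orbit_key_def S_def[symmetric] snd_conv using graph by blast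
    then show ?thesis
      using that unfolding K_def S_def by (simp add: orbit_key_def)
  qed
  then have "orbit_key C ` X \<subseteq> K"
    by blast
  moreover have "finite K"
    using finite_A_orbits assms unfolding K_def by (intro finite_SigmaI) auto
  ultimately show ?thesis
    by (rule finite_subset)
qed

lemma orbit_key_eqD:
  assumes C: "finite C" and y: "y1 \<in> X" and key: "orbit_key C y1 = orbit_key C y2"
  shows "orbit act C y1 = orbit act C y2"
proof -
  define x where "x = orbit_rep (orbit act A y1)"
  have same_rep: "orbit_rep (orbit act A y2) = x"
    using key by (simp add: orbit_key_def x_def)
  obtain \<pi>1 where \<pi>1: "fixing A \<pi>1" "act \<pi>1 x = y1"
    using orbit_repE[OF y] unfolding x_def by blast
  have "(\<lambda>t. (t, cut_pos C (\<pi>1 t))) ` supp x \<in> snd (orbit_key C y1)"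
    unfolding orbit_key_def x_def[symmetric] snd_conv using \<pi>1 by blast
  then have "(\<lambda>t. (t, cut_pos C (\<pi>1 t))) ` supp x \<in> snd (orbit_key C y2)"
    using key by simp
  then obtain \<pi>2 where \<pi>2: "fixing A \<pi>2" "act \<pi>2 x = y2"
    and graphs: "(\<lambda>t. (t, cut_pos C (\<pi>1 t))) ` supp x = (\<lambda>t. (t, cut_pos C (\<pi>2 t))) ` supp x"
    unfolding orbit_key_def same_rep by auto
  have same_pos: "cut_pos C (\<pi>1 t) = cut_pos C (\<pi>2 t)" if "t \<in> supp x" for t
  proof -
    have "(t, cut_pos C (\<pi>1 t)) \<in> (\<lambda>t. (t, cut_pos C (\<pi>2 t))) ` supp x"
      using graphs that by blast
    then show ?thesis
      by auto
  qed
  have a1: "aut \<pi>1" and a2: "aut \<pi>2"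
    using \<pi>1 \<pi>2 fixing_aut by blast+
  define \<pi> where "\<pi> = \<pi>2 \<circ> inv \<pi>1"
  have a: "aut \<pi>"
    unfolding \<pi>_def using a1 a2 by (simp add: aut_comp aut_inv)
  have "\<forall>t\<in>\<pi>1 ` supp x. \<forall>c\<in>C. (t < c \<longleftrightarrow> \<pi> t < c) \<and> (c < t \<longleftrightarrow> c < \<pi> t)"
  proof (intro ballI)
    fix t c assume "t \<in> \<pi>1 ` supp x" "c \<in> C"
    then obtain u where "u \<in> supp x" "t = \<pi>1 u" "\<pi> t = \<pi>2 u"
      using a1 by (auto simp: \<pi>_def)
    then show "(t < c \<longleftrightarrow> \<pi> t < c) \<and> (c < t \<longleftrightarrow> c < \<pi> t)"
      using cut_pos_eqD[OF same_pos \<open>c \<in> C\<close>] by simp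
  qed
  then obtain \<rho> where \<rho>: "fixing C \<rho>" "\<forall>t\<in>\<pi>1 ` supp x. \<rho> t = \<pi> t"
    using fixing_extends[OF C finite_imageI[OF finite_supp] a] by blast
  have "supp y1 = \<pi>1 ` supp x"
    using supp_act[OF a1, of x] \<pi>1(2) by simp
  then have "act \<rho> y1 = act \<pi> y1"
    using supp_agree[OF fixing_aut[OF \<rho>(1)] a] \<rho>(2) by simp
  also have "\<dots> = act \<pi>2 x"
    unfolding \<pi>1(2)[symmetric] \<pi>_def using a1 a2 by (simp add: act_comp aut_inv)
  also have "\<dots> = y2"
    by (rule \<pi>2(2))
  finally have "y2 \<in> orbit act C y1"
    using orbit_memI[OF \<rho>(1), of y1] by simp
  then show ?thesis
    by (rule orbit_eq[symmetric])
qed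

lemma finite_orbits: "finite C \<Longrightarrow> finite (orbit act C ` X)"
  using finite_image_factor(1)[OF finite_orbit_keys] orbit_key_eqD by blast

end

section \<open>A potential on orbits\<close>

text \<open>The position of \<open>t\<close> in the order type of \<open>C\<close>: the points of \<open>C\<close> get odd ranks, the
  open cells between them even ranks.\<close>
definition cut_rank :: "rat set \<Rightarrow> rat \<Rightarrow> nat" where
  "cut_rank C t = 2 * card {c\<in>C. c < t} + (if t \<in> C then 1 else 0)"

lemma cut_rank_remove:
  assumes "finite C" "c \<in> C"
  shows "cut_rank C x = cut_rank (C - {c}) x + (if c < x then 2 else 0) + (if x = c then 1 else 0)"
proof (cases "c < x")
  case True
  then have "{d\<in>C. d < x} = insert c {d\<in>C - {c}. d < x}"
    using assms by auto
  then have "card {d\<in>C. d < x} = Suc (card {d\<in>C - {c}. d < x})"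
    using assms(1) by simp
  then show ?thesis
    using True unfolding cut_rank_def by auto
next
  case False
  then have "{d\<in>C. d < x} = {d\<in>C - {c}. d < x}"
    by auto
  then show ?thesis
    using False assms(2) unfolding cut_rank_def by auto
qed

lemma cut_rank_fixing:
  assumes "fixing C \<pi>"
  shows "cut_rank C (\<pi> t) = cut_rank C t"
proof -
  have "{c\<in>C. c < \<pi> t} = {c\<in>C. c < t}"
    using fixing_less_iff[OF assms] by blast
  moreover have "\<pi> t = t" if "\<pi> t \<in> C"
    using fixing_fixes[OF assms that] aut_eq_iff[OF fixing_aut[OF assms], of "\<pi> t" t] by simp
  then have "\<pi> t \<in> C \<longleftrightarrow> t \<in> C"
    using fixing_fixes[OF assms, of t] by auto
  ultimately show ?thesis
    unfolding cut_rank_def by simp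
qed

lemma cut_rank_strict_mono:
  assumes "finite C" "c \<in> C" "a \<le> c" "c < b"
  shows "cut_rank C a < cut_rank C b"
proof -
  have "{d\<in>C. d < a} \<subseteq> {d\<in>C. d < b}"
    using assms(3,4) by auto
  moreover have "c \<in> {d\<in>C. d < b} - {d\<in>C. d < a}"
    using assms(2-4) by auto
  ultimately have "{d\<in>C. d < a} \<subset> {d\<in>C. d < b}"
    by blast
  then have "card {d\<in>C. d < a} < card {d\<in>C. d < b}"
    using assms(1) by (intro psubset_card_mono) auto
  then show ?thesis
    unfolding cut_rank_def by auto
qed

lemma cut_rank_le: "finite C \<Longrightarrow> cut_rank C t \<le> 2 * card C + 1"
  unfolding cut_rank_def using card_mono[of C "{c\<in>C. c < t}"] by auto

definition covers :: "'a::linorder set \<Rightarrow> 'a \<Rightarrow> 'a \<Rightarrow> bool" where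
  "covers D t c \<longleftrightarrow> t \<le> c \<and> (\<forall>d\<in>D. d < c \<longrightarrow> d < t)"

lemma covers_image:
  assumes "aut \<pi>"
  shows "covers (\<pi> ` D) (\<pi> t) (\<pi> c) \<longleftrightarrow> covers D t c"
  unfolding covers_def using aut_le_iff[OF assms] aut_less_iff[OF assms] by auto

lemma obtain_greatest_covering:
  fixes S :: "'a::linorder set"
  assumes "finite S" "t \<in> S" "covers D t c"
  obtains ts where "ts \<in> S" "covers D ts c" "\<forall>u\<in>S. u \<le> c \<longrightarrow> u \<le> ts"
proof
  let ?M = "Max {u\<in>S. u \<le> c}"
  have fin: "finite {u\<in>S. u \<le> c}" and ne: "{u\<in>S. u \<le> c} \<noteq> {}"
    using assms unfolding covers_def by auto
  have "?M \<in> {u\<in>S. u \<le> c}"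
    using Max_in[OF fin ne] .
  moreover have "\<forall>u\<in>S. u \<le> c \<longrightarrow> u \<le> ?M"
    using Max_ge[OF fin] by blast
  ultimately have M: "?M \<in> S" "?M \<le> c" "\<forall>u\<in>S. u \<le> c \<longrightarrow> u \<le> ?M"
    by auto
  then show "?M \<in> S" "\<forall>u\<in>S. u \<le> c \<longrightarrow> u \<le> ?M"
    by auto
  have "t \<le> ?M"
    using M(3) assms(2,3) unfolding covers_def by blast
  then show "covers D ?M c"
    using M(2) assms(3) unfolding covers_def by force
qed

lemma cut_rank_fixing_remove:
  assumes C: "finite C" "c \<in> C" and \<pi>: "fixing (C - {c}) \<pi>" and uncovered: "\<not> covers C t c"
  shows "cut_rank C (\<pi> t) \<le> cut_rank C t"
    and "cut_rank C (\<pi> t) = cut_rank C t \<Longrightarrow> \<forall>d\<in>C. (t < d \<longleftrightarrow> \<pi> t < d) \<and> (d < t \<longleftrightarrow> d < \<pi> t)"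
proof -
  have aut: "aut \<pi>"
    using \<pi> fixing_aut by blast
  have rank_\<pi>: "cut_rank C (\<pi> t) = cut_rank (C - {c}) t + (if c < \<pi> t then 2 else 0) + (if \<pi> t = c then 1 else 0)"
    using cut_rank_remove[OF C, of "\<pi> t"] cut_rank_fixing[OF \<pi>] by simp
  have rank_t: "cut_rank C t = cut_rank (C - {c}) t + (if c < t then 2 else 0) + (if t = c then 1 else 0)"
    using cut_rank_remove[OF C] by simp
  have others: "(t < d \<longleftrightarrow> \<pi> t < d) \<and> (d < t \<longleftrightarrow> d < \<pi> t)" if "d \<in> C - {c}" for d
    using fixing_less_iff[OF \<pi> that] fixing_greater_iff[OF \<pi> that] by simp
  consider d where "d \<in> C" "d < c" "t \<le> d" | "c < t"
    using uncovered unfolding covers_def by force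
  then have "cut_rank C (\<pi> t) \<le> cut_rank C t \<and>
    (cut_rank C (\<pi> t) = cut_rank C t \<longrightarrow> (t < c \<longleftrightarrow> \<pi> t < c) \<and> (c < t \<longleftrightarrow> c < \<pi> t))"
  proof cases
    case (1 d)
    then have "\<pi> t \<le> d"
      using fixing_fixes[OF \<pi>, of d] aut_le_iff[OF aut, of t d] by simp
    then show ?thesis
      using 1 rank_\<pi> rank_t by auto
  next
    case 2
    then show ?thesis
      using rank_\<pi> rank_t by auto
  qed
  then show "cut_rank C (\<pi> t) \<le> cut_rank C t"
    and "cut_rank C (\<pi> t) = cut_rank C t \<Longrightarrow> \<forall>d\<in>C. (t < d \<longleftrightarrow> \<pi> t < d) \<and> (d < t \<longleftrightarrow> d < \<pi> t)"
    using others by auto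
qed

context definable_set
begin

definition potential :: "rat set \<Rightarrow> 'x \<Rightarrow> nat" where
  "potential C y = (\<Sum>t\<in>supp y. cut_rank C t)"

definition basic :: "rat set \<Rightarrow> 'x \<Rightarrow> bool" where
  "basic D y \<longleftrightarrow> (\<forall>c\<in>D - A. \<exists>t\<in>supp y. covers D t c)"

definition covered :: "rat set \<Rightarrow> rat set \<Rightarrow> rat set" where
  "covered C S = {c\<in>C - A. \<exists>t\<in>S. covers C t c}"

lemma potential_act:
  assumes "aut \<pi>"
  shows "potential C (act \<pi> y) = (\<Sum>t\<in>supp y. cut_rank C (\<pi> t))"
  unfolding potential_def supp_act[OF assms]
  using aut_inj[OF assms] by (simp add: sum.reindex inj_on_def)

lemma potential_bounded: "aut \<pi> \<Longrightarrow> finite C \<Longrightarrow> potential C (act \<pi> y) \<le> card (supp y) * (2 * card C + 1)"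
  using sum_mono[of "supp y" "\<lambda>t. cut_rank C (\<pi> t)" "\<lambda>_. 2 * card C + 1"] cut_rank_le
  by (simp add: potential_act)

lemma basic_act:
  assumes "fixing A \<pi>" "basic D y"
  shows "basic (\<pi> ` D) (act \<pi> y)"
  unfolding basic_def
proof
  have aut: "aut \<pi>"
    using assms fixing_aut by blast
  fix c' assume "c' \<in> \<pi> ` D - A"
  then obtain c where c: "c \<in> D" "c \<notin> A" "c' = \<pi> c"
    using fixing_fixes[OF assms(1)] by force
  then obtain t where t: "t \<in> supp y" "covers D t c"
    using assms(2) unfolding basic_def by blast
  then have "\<pi> t \<in> supp (act \<pi> y)"
    using supp_act[OF aut] by simp
  moreover have "covers (\<pi> ` D) (\<pi> t) c'"
    using covers_image[OF aut] t(2) c(3) by simp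
  ultimately show "\<exists>t\<in>supp (act \<pi> y). covers (\<pi> ` D) t c'"
    by blast
qed

lemma covered_fixing:
  assumes "fixing C \<pi>"
  shows "covered C (\<pi> ` S) = covered C S"
proof -
  have "covers C (\<pi> t) c \<longleftrightarrow> covers C t c" if "c \<in> C" for t c
    using covers_image[OF fixing_aut[OF assms], of C t c] fixing_image_eq[OF assms, of C]
      fixing_fixes[OF assms that] by simp
  then show ?thesis
    unfolding covered_def by auto
qed

lemma potential_drop:
  assumes C: "finite C" "c \<in> C" and \<pi>: "fixing (C - {c}) \<pi>"
    and uncovered: "\<not> (\<exists>t\<in>supp y. covers C t c)"
    and moved: "act \<pi> y \<notin> orbit act C y"
  shows "potential C (act \<pi> y) < potential C y"
proof -
  have aut: "aut \<pi>"
    using \<pi> fixing_aut by blast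
  have "\<exists>t\<in>supp y. cut_rank C (\<pi> t) \<noteq> cut_rank C t"
  proof (rule ccontr)
    assume "\<not> ?thesis"
    then have "\<forall>t\<in>supp y. \<forall>d\<in>C. (t < d \<longleftrightarrow> \<pi> t < d) \<and> (d < t \<longleftrightarrow> d < \<pi> t)"
      using cut_rank_fixing_remove(2)[OF C \<pi>] uncovered by blast
    then obtain \<rho> where \<rho>: "fixing C \<rho>" "\<forall>t\<in>supp y. \<rho> t = \<pi> t"
      using fixing_extends[OF C(1) finite_supp aut] by blast
    then have "act \<rho> y = act \<pi> y"
      using supp_agree[OF fixing_aut[OF \<rho>(1)] aut] by blast
    then show False
      using moved orbit_memI[OF \<rho>(1), of y] by simp
  qed
  then have "(\<Sum>t\<in>supp y. cut_rank C (\<pi> t)) < (\<Sum>t\<in>supp y. cut_rank C t)"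
    using cut_rank_fixing_remove(1)[OF C \<pi>] uncovered
    by (intro sum_strict_mono_ex1) (auto simp: order.strict_iff_order)
  then show ?thesis
    using potential_act[OF aut, of C y] by (simp add: potential_def)
qed

text \<open>Pushing the support point \<open>ts\<close> upwards past the point \<open>c\<close> of \<open>C\<close>, within its cell of
  \<open>D \<union> (supp y - {ts})\<close>, raises the potential without leaving the \<open>D\<close>-orbit.\<close>
lemma potential_increase:
  assumes fin: "finite C" "finite D" and ts: "ts \<in> supp y" "ts \<notin> D" and c: "c \<in> C" "ts \<le> c"
    and gap: "\<forall>f\<in>D \<union> (supp y - {ts}). \<not> (ts < f \<and> f \<le> c)"
  shows "\<exists>y'\<in>orbit act D y. potential C y < potential C y'"
proof -
  define F where "F = D \<union> (supp y - {ts})"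
  have F: "finite F" "ts \<notin> F"
    using fin ts by (auto simp: F_def)
  have "c \<notin> F"
    using gap F(2) c(2) unfolding F_def[symmetric] by (cases "ts = c") auto
  then obtain r where r: "c < r" "r \<notin> F" "\<forall>f\<in>F. f < c \<longleftrightarrow> f < r"
    using exists_greater_same_cut[OF F(1)] by blast
  have "f < ts \<longleftrightarrow> f < r" if "f \<in> F" for f
  proof -
    have "f \<noteq> ts" "\<not> (ts < f \<and> f \<le> c)"
      using that F(2) gap unfolding F_def by auto
    then show ?thesis
      using r(1) r(3) that c(2) by (cases "f < ts") auto
  qed
  then obtain \<sigma> where \<sigma>: "fixing F \<sigma>" "\<sigma> ts = r"
    using fixing_move_point[OF F r(2)] by blast
  have aut: "aut \<sigma>"
    using \<sigma>(1) fixing_aut by blast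
  have "act \<sigma> y \<in> orbit act D y"
    using orbit_memI fixing_subset[OF \<sigma>(1)] unfolding F_def by blast
  moreover have "potential C y < potential C (act \<sigma> y)"
  proof -
    have "\<sigma> ` (supp y - {ts}) = supp y - {ts}"
      using fixing_image_eq[OF \<sigma>(1)] unfolding F_def by blast
    then have "supp (act \<sigma> y) = insert r (supp y - {ts})"
      using supp_act[OF aut, of y] \<sigma>(2) insert_Diff[OF ts(1)] image_insert[of \<sigma> ts "supp y - {ts}"]
      by simp
    moreover have "r \<notin> supp y - {ts}"
      using r(2) unfolding F_def by blast
    ultimately have "potential C (act \<sigma> y) = cut_rank C r + (\<Sum>t\<in>supp y - {ts}. cut_rank C t)"
      unfolding potential_def by simp
    moreover have "potential C y = cut_rank C ts + (\<Sum>t\<in>supp y - {ts}. cut_rank C t)"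
      unfolding potential_def by (rule sum.remove[OF finite_supp ts(1)])
    moreover have "cut_rank C ts < cut_rank C r"
      using cut_rank_strict_mono[OF fin(1) c r(1)] .
    ultimately show ?thesis
      by linarith
  qed
  ultimately show ?thesis
    by blast
qed

end

context definable_set
begin

lemma covered_subset_of_max_potential:
  assumes fin: "finite C" "finite D" "D \<subseteq> C"
    and max: "\<forall>y'\<in>orbit act D y. \<not> potential C y < potential C y'"
  shows "covered C (supp y) \<subseteq> D"
proof
  fix c assume "c \<in> covered C (supp y)"
  then obtain t where c: "c \<in> C" "t \<in> supp y" "covers C t c"
    unfolding covered_def by blast
  show "c \<in> D"
  proof (rule ccontr)
    assume "c \<notin> D"
    obtain ts where ts: "ts \<in> supp y" "covers C ts c" "\<forall>u\<in>supp y. u \<le> c \<longrightarrow> u \<le> ts"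
      using obtain_greatest_covering[OF finite_supp c(2,3)] by blast
    have below: "\<forall>d\<in>C. d < c \<longrightarrow> d < ts" "ts \<le> c"
      using ts(2) unfolding covers_def by auto
    have "ts \<notin> D"
    proof
      assume "ts \<in> D"
      then have "ts < c"
        using \<open>c \<notin> D\<close> below(2) by (cases "ts = c") auto
      then show False
        using below(1) \<open>ts \<in> D\<close> fin(3) by auto
    qed
    moreover have "\<not> (ts < f \<and> f \<le> c)" if "f \<in> D \<union> (supp y - {ts})" for f
    proof (cases "f \<in> D")
      case True
      then have "f \<noteq> c" "f \<in> C"
        using \<open>c \<notin> D\<close> fin(3) by auto
      then show ?thesis
        using bspec[OF below(1) \<open>f \<in> C\<close>] by auto
    next
      case False
      then show ?thesis
        using that ts(3) by auto
    qed
    ultimately obtain y' where "y' \<in> orbit act D y" "potential C y < potential C y'"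
      using potential_increase[OF fin(1,2) ts(1) _ c(1) below(2)] by blast
    then show False
      using max by blast
  qed
qed

lemma covered_supset_of_max_potential:
  assumes fin: "finite C" "finite D" "D \<subseteq> C" and "basic D y"
    and max: "\<forall>y'\<in>orbit act D y. \<not> potential C y < potential C y'"
  shows "D - A \<subseteq> covered C (supp y)"
proof
  fix d assume d: "d \<in> D - A"
  then obtain t where "t \<in> supp y" "covers D t d"
    using \<open>basic D y\<close> unfolding basic_def by blast
  then obtain ts where ts: "ts \<in> supp y" "covers D ts d" "\<forall>u\<in>supp y. u \<le> d \<longrightarrow> u \<le> ts"
    using obtain_greatest_covering[OF finite_supp] by blast
  have below: "\<forall>e\<in>D. e < d \<longrightarrow> e < ts" "ts \<le> d"
    using ts(2) unfolding covers_def by auto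
  show "d \<in> covered C (supp y)"
  proof (rule ccontr)
    assume "d \<notin> covered C (supp y)"
    then have "\<not> covers C ts d"
      using d fin(3) ts(1) unfolding covered_def by blast
    then obtain c where c: "c \<in> C" "c < d" "ts \<le> c"
      using below(2) unfolding covers_def by force
    have "ts \<notin> D"
    proof
      assume "ts \<in> D"
      then have "ts < ts"
        using below(1) c(2,3) by auto
      then show False
        by simp
    qed
    moreover have "\<not> (ts < f \<and> f \<le> c)" if "f \<in> D \<union> (supp y - {ts})" for f
      using that below(1) ts(3) c(2) by auto
    ultimately obtain y' where "y' \<in> orbit act D y" "potential C y < potential C y'"
      using potential_increase[OF fin(1,2) ts(1) _ c(1) c(3)] by blast
    then show False
      using max by blast
  qed
qed

definition basic_support :: "rat set \<Rightarrow> 'x \<Rightarrow> rat set" where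
  "basic_support C y = A \<union> covered C (supp y)"

lemma basic_support_fixing:
  assumes "fixing C \<pi>"
  shows "basic_support C (act \<pi> y) = basic_support C y"
  unfolding basic_support_def supp_act[OF fixing_aut[OF assms]] covered_fixing[OF assms] ..

text \<open>Take \<open>y\<close> of maximal potential in the \<open>D\<close>-orbit of \<open>y0\<close>.\<close>
lemma exists_basic_support_eq:
  assumes C: "finite C" and D: "A \<subseteq> D" "D \<subseteq> C" and "basic D y0"
  shows "\<exists>y\<in>orbit act D y0. basic_support C y = D"
proof -
  have fin_D: "finite D"
    using C D(2) finite_subset by blast
  have "potential C z < card (supp y0) * (2 * card C + 1) + 1" if "z \<in> orbit act D y0" for z
    using that potential_bounded[OF _ C, of _ y0] fixing_aut unfolding orbit_def by fastforce
  then obtain y where y: "y \<in> orbit act D y0"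
    and greatest: "\<forall>z. z \<in> orbit act D y0 \<longrightarrow> potential C z \<le> potential C y"
    using ex_has_greatest_nat[of "\<lambda>z. z \<in> orbit act D y0" y0 "potential C"] orbit_refl by blast
  have max: "\<forall>y'\<in>orbit act D y. \<not> potential C y < potential C y'"
    using greatest orbit_eq[OF y] by (simp add: not_less)
  obtain \<pi> where \<pi>: "fixing D \<pi>" "y = act \<pi> y0"
    using y unfolding orbit_def by blast
  have "basic D y"
    using basic_act[OF fixing_subset[OF \<pi>(1) D(1)] \<open>basic D y0\<close>]
      fixing_image_eq[OF \<pi>(1) subset_refl] \<pi>(2) by simp
  then have "basic_support C y = D"
    using covered_subset_of_max_potential[OF C fin_D D(2) max]
      covered_supset_of_max_potential[OF C fin_D D(2) _ max] D(1)
    unfolding basic_support_def by blast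
  then show ?thesis
    using y by blast
qed

end

section \<open>Spanning by orbit indicators\<close>

lemma (in vector_space) independent_if_card_le_independent:
  assumes "finite B" "independent I" "I \<subseteq> span B" "card B \<le> card I"
  shows "independent B"
proof -
  obtain B' where B': "B' \<subseteq> B" "independent B'" "B \<subseteq> span B'"
    using maximal_independent_subset by blast
  have "I \<subseteq> span B'"
    using assms(3) B'(3) span_mono[of B "span B'"] by (simp add: span_span)
  then have "card I \<le> card B'"
    using independent_span_bound[of B' I] B'(1) assms(1,2) finite_subset by blast
  then have "B' = B"
    using B'(1) assms(1,4) by (meson card_seteq order_trans)
  then show ?thesis
    using B'(2) by simp
qed

interpretation fun_vs: vector_space "fscale :: 'k::field \<Rightarrow> ('x \<Rightarrow> 'k) \<Rightarrow> ('x \<Rightarrow> 'k)"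
  by unfold_locales (auto simp: fscale_def fun_eq_iff algebra_simps)

lemma sum_apply: "(sum f S) x = (\<Sum>i\<in>S. f i x)"
  by (induction S rule: infinite_finite_induct) auto

lemma sum_fscale_apply: "(\<Sum>v\<in>S. fscale (u v) (g v)) x = (\<Sum>v\<in>S. u v * g v x)"
  by (simp add: sum_apply fscale_def)

lemma indicator_Union_disjoint:
  assumes "finite Os" "disjoint Os"
  shows "(\<Sum>S\<in>Os. indicator S) = (indicator (\<Union>Os) :: 'a \<Rightarrow> 'k::field)"
proof
  fix x
  have "disjoint_family_on id Os"
    using disjoint_image_disjoint_family_on[of id Os] assms(2) by simp
  then have "indicator (\<Union>(id ` Os)) x = (\<Sum>S\<in>Os. indicator (id S) x :: 'k)"
    by (rule indicator_UN_disjoint[OF assms(1)])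
  then show "(\<Sum>S\<in>Os. indicator S) x = (indicator (\<Union>Os) x :: 'k)"
    by (simp add: sum_apply)
qed

lemma indicator_independent:
  assumes disj: "disjoint Fam" and ne: "{} \<notin> Fam"
  shows "\<not> fun_vs.dependent ((indicator :: 'a set \<Rightarrow> 'a \<Rightarrow> 'k::field) ` Fam)"
  unfolding fun_vs.dependent_explicit
proof
  assume "\<exists>T u. finite T \<and> T \<subseteq> (indicator :: 'a set \<Rightarrow> 'a \<Rightarrow> 'k) ` Fam \<and>
    (\<Sum>v\<in>T. fscale (u v) v) = 0 \<and> (\<exists>v\<in>T. u v \<noteq> 0)"
  then obtain T u S where T: "finite T" "T \<subseteq> (indicator :: 'a set \<Rightarrow> 'a \<Rightarrow> 'k) ` Fam"
    "(\<Sum>v\<in>T. fscale (u v) v) = 0" and S: "S \<in> Fam" "indicator S \<in> T" "u (indicator S) \<noteq> 0"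
    by blast
  have "S \<noteq> {}"
    using ne S(1) by blast
  then obtain x where x: "x \<in> S"
    by blast
  have "w x = 0" if w: "w \<in> T - {indicator S}" for w
  proof -
    obtain S' where "S' \<in> Fam" "w = indicator S'"
      using w T(2) by blast
    moreover from this have "S' \<noteq> S"
      using w by auto
    ultimately have "x \<notin> S'"
      using x disj S(1) by (auto simp: disjoint_def)
    then show ?thesis
      using \<open>w = indicator S'\<close> by simp
  qed
  then have "(\<Sum>w\<in>T - {indicator S}. u w * w x) = 0"
    by (intro sum.neutral) simp
  then have "(\<Sum>w\<in>T. u w * w x) = u (indicator S) * indicator S x"
    using sum.remove[OF T(1) S(2), of "\<lambda>w. u w * w x"] by simp
  also have "\<dots> = u (indicator S)"
    using x by simp
  finally show False
    using T(3) S(3) sum_fscale_apply[of u "\<lambda>v. v" T x] by simp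
qed

context definable_set
begin

lemma fun_act_indicator:
  assumes "aut \<pi>"
  shows "fun_act act \<pi> (indicator S) = indicator (act \<pi> ` S)"
proof -
  have "act (inv \<pi>) z \<in> S \<longleftrightarrow> z \<in> act \<pi> ` S" for z
    using assms act_act_inv[OF assms, of z] by (auto intro: image_eqI[of z _ "act (inv \<pi>) z"])
  then show ?thesis
    unfolding fun_act_def by (auto simp: indicator_def fun_eq_iff)
qed

lemma fun_act_comp:
  assumes "aut \<pi>" "aut \<sigma>"
  shows "fun_act act \<pi> (fun_act act \<sigma> f) = fun_act act (\<pi> \<circ> \<sigma>) f"
proof -
  have "inv (\<pi> \<circ> \<sigma>) = inv \<sigma> \<circ> inv \<pi>"
    using assms aut_bij o_inv_distrib by blast
  then have "act (inv (\<pi> \<circ> \<sigma>)) z = act (inv \<sigma>) (act (inv \<pi>) z)" for z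
    using assms by (simp add: act_comp aut_inv)
  then show ?thesis
    by (simp add: fun_act_def fun_eq_iff)
qed

lemma fun_act_inv_cancel: "aut \<pi> \<Longrightarrow> fun_act act \<pi> (fun_act act (inv \<pi>) f) = f"
  by (simp add: fun_act_def fun_eq_iff)

definition basic_indicators :: "rat set \<Rightarrow> ('x \<Rightarrow> 'k::field) set" where
  "basic_indicators C = {indicator (orbit act D y) | D y. A \<subseteq> D \<and> D \<subseteq> C \<and> y \<in> X \<and> basic D y}"

lemma basic_indicators_mono: "C \<subseteq> C' \<Longrightarrow> basic_indicators C \<subseteq> basic_indicators C'"
  unfolding basic_indicators_def by blast

lemma indicator_orbit_remove_point:
  assumes C: "finite C" "A \<subseteq> C - {c}" and y: "y \<in> X"
  defines "Os \<equiv> orbit act C ` orbit act (C - {c}) y - {orbit act C y}"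
  shows "indicator (orbit act (C - {c}) y) = indicator (orbit act C y) + (\<Sum>Ob\<in>Os. indicator Ob :: 'x \<Rightarrow> 'k::field)"
proof -
  let ?Os = "orbit act C ` orbit act (C - {c}) y"
  have "?Os \<subseteq> orbit act C ` X"
    using orbit_subset_X[OF C(2) y] by blast
  then have fin: "finite ?Os"
    using finite_orbits[OF C(1)] finite_subset by blast
  have "\<Union>?Os = orbit act (C - {c}) y"
  proof
    show "\<Union>?Os \<subseteq> orbit act (C - {c}) y"
      using orbit_antimono[of "C - {c}" C] orbit_eq by blast
    show "orbit act (C - {c}) y \<subseteq> \<Union>?Os"
      using orbit_refl by blast
  qed
  then have "indicator (orbit act (C - {c}) y) = (\<Sum>Ob\<in>?Os. indicator Ob :: 'x \<Rightarrow> 'k)"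
    using indicator_Union_disjoint[OF fin disjoint_orbits, where 'k = 'k] by simp
  also have "\<dots> = indicator (orbit act C y) + (\<Sum>Ob\<in>Os. indicator Ob)"
    unfolding Os_def using sum.remove[OF fin, of "orbit act C y"] orbit_refl by blast
  finally show ?thesis .
qed

text \<open>Non-basic orbit indicators are eliminated by splitting the orbit over a smaller
  support: all the other pieces have lower potential.\<close>
lemma indicator_orbit_in_span_step:
  assumes C: "finite C" "A \<subseteq> C"
    and smaller: "\<And>c y. c \<in> C - A \<Longrightarrow> y \<in> X \<Longrightarrow>
      (indicator (orbit act (C - {c}) y) :: 'x \<Rightarrow> 'k::field) \<in> fun_vs.span (basic_indicators C)"
  shows "y \<in> X \<Longrightarrow> (indicator (orbit act C y) :: 'x \<Rightarrow> 'k) \<in> fun_vs.span (basic_indicators C)"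
proof (induction "potential C y" arbitrary: y rule: less_induct)
  case less
  show ?case
  proof (cases "basic C y")
    case True
    then have "indicator (orbit act C y) \<in> (basic_indicators C :: ('x \<Rightarrow> 'k) set)"
      using C(2) less.prems unfolding basic_indicators_def by blast
    then show ?thesis
      by (rule fun_vs.span_base)
  next
    case False
    then obtain c where c: "c \<in> C" "c \<notin> A" "\<not> (\<exists>t\<in>supp y. covers C t c)"
      unfolding basic_def by blast
    have A_sub: "A \<subseteq> C - {c}"
      using C(2) c(2) by blast
    define Os where "Os = orbit act C ` orbit act (C - {c}) y - {orbit act C y}"
    have "(indicator Ob :: 'x \<Rightarrow> 'k) \<in> fun_vs.span (basic_indicators C)" if Ob: "Ob \<in> Os" for Ob
    proof -
      obtain z where z: "z \<in> orbit act (C - {c}) y" "Ob = orbit act C z" "z \<notin> orbit act C y"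
        using Ob orbit_eq unfolding Os_def by blast
      obtain \<pi> where \<pi>: "fixing (C - {c}) \<pi>" "z = act \<pi> y"
        using z(1) unfolding orbit_def by blast
      have "potential C z < potential C y"
        using potential_drop[OF C(1) c(1) \<pi>(1) c(3)] z(3) \<pi>(2) by simp
      moreover have "z \<in> X"
        using orbit_subset_X[OF A_sub less.prems] z(1) by blast
      ultimately show ?thesis
        using less.hyps z(2) by simp
    qed
    then have "(\<Sum>Ob\<in>Os. indicator Ob :: 'x \<Rightarrow> 'k) \<in> fun_vs.span (basic_indicators C)"
      by (rule fun_vs.span_sum)
    moreover have "(indicator (orbit act (C - {c}) y) :: 'x \<Rightarrow> 'k) \<in> fun_vs.span (basic_indicators C)"
      using smaller[of c y] c(1,2) less.prems by blast
    moreover have "(indicator (orbit act C y) :: 'x \<Rightarrow> 'k) =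
        indicator (orbit act (C - {c}) y) - (\<Sum>Ob\<in>Os. indicator Ob)"
      using indicator_orbit_remove_point[OF C(1) A_sub less.prems, where 'k = 'k] unfolding Os_def by simp
    ultimately show ?thesis
      using fun_vs.span_diff by simp
  qed
qed

lemma indicator_orbit_in_span:
  "finite C \<Longrightarrow> A \<subseteq> C \<Longrightarrow> y \<in> X \<Longrightarrow>
    (indicator (orbit act C y) :: 'x \<Rightarrow> 'k::field) \<in> fun_vs.span (basic_indicators C)"
proof (induction "card C" arbitrary: C y rule: less_induct)
  case less
  have smaller: "(indicator (orbit act (C - {c}) y) :: 'x \<Rightarrow> 'k) \<in> fun_vs.span (basic_indicators C)"
    if "c \<in> C - A" "y \<in> X" for c y
  proof -
    have "card C > 0"
      using that less.prems(1) card_gt_0_iff by blast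
    then have "card (C - {c}) < card C"
      using that less.prems(1) by simp
    then have "(indicator (orbit act (C - {c}) y) :: 'x \<Rightarrow> 'k) \<in> fun_vs.span (basic_indicators (C - {c}))"
      using less.hyps less.prems(1,2) that by blast
    then show ?thesis
      using fun_vs.span_mono[OF basic_indicators_mono[of "C - {c}" C]] by blast
  qed
  show ?case
    by (rule indicator_orbit_in_span_step[OF less.prems(1,2) smaller less.prems(3)])
qed

end

lemma inj_indicator: "inj (indicator :: 'a set \<Rightarrow> 'a \<Rightarrow> 'k::zero_neq_one)"
proof (rule injI)
  fix S T :: "'a set" assume eq: "(indicator S :: 'a \<Rightarrow> 'k) = indicator T"
  show "S = T"
  proof (rule set_eqI)
    fix x show "x \<in> S \<longleftrightarrow> x \<in> T"
      using fun_cong[OF eq, of x] by (cases "x \<in> S"; cases "x \<in> T") simp_all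
  qed
qed

context definable_set
begin

definition basis :: "('x \<Rightarrow> 'k::field) set" where
  "basis = {indicator (orbit act D y) | D y. finite D \<and> A \<subseteq> D \<and> y \<in> X \<and> basic D y}"

lemma basic_indicators_subset_basis: "finite C \<Longrightarrow> basic_indicators C \<subseteq> basis"
  unfolding basic_indicators_def basis_def using finite_subset by blast

lemma card_basic_indicators_le:
  assumes C: "finite C" "A \<subseteq> C"
  shows "finite (basic_indicators C :: ('x \<Rightarrow> 'k::field) set)"
    and "card (basic_indicators C :: ('x \<Rightarrow> 'k) set) \<le> card (orbit act C ` X)"
proof -
  define ind where "ind y = (indicator (orbit act (basic_support C y) y) :: 'x \<Rightarrow> 'k)" for y
  have "ind y1 = ind y2" if same_orbit: "orbit act C y1 = orbit act C y2" for y1 y2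
  proof -
    obtain \<pi> where \<pi>: "fixing C \<pi>" "y2 = act \<pi> y1"
      using same_orbit orbit_refl[of y2 C] unfolding orbit_def by auto
    have "basic_support C y1 \<subseteq> C"
      using C(2) unfolding basic_support_def covered_def by blast
    then have "y2 \<in> orbit act (basic_support C y1) y1"
      using orbit_memI[OF fixing_subset[OF \<pi>(1)]] \<pi>(2) by blast
    then show ?thesis
      unfolding ind_def \<pi>(2) basic_support_fixing[OF \<pi>(1)] using orbit_eq by simp
  qed
  then have fin: "finite (ind ` X)" and card: "card (ind ` X) \<le> card (orbit act C ` X)"
    using finite_image_factor[OF finite_orbits[OF C(1)], where f = ind] by blast+
  have "basic_indicators C \<subseteq> ind ` X"
  proof
    fix b assume "b \<in> (basic_indicators C :: ('x \<Rightarrow> 'k) set)"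
    then obtain D y0 where D: "b = indicator (orbit act D y0)" "A \<subseteq> D" "D \<subseteq> C" "y0 \<in> X" "basic D y0"
      unfolding basic_indicators_def by blast
    obtain y where y: "y \<in> orbit act D y0" "basic_support C y = D"
      using exists_basic_support_eq[OF C(1) D(2,3,5)] by blast
    then have "ind y = b"
      unfolding ind_def D(1) using orbit_eq by simp
    moreover have "y \<in> X"
      using y(1) orbit_subset_X[OF D(2,4)] by blast
    ultimately show "b \<in> ind ` X"
      by blast
  qed
  then show "finite (basic_indicators C :: ('x \<Rightarrow> 'k) set)"
    and "card (basic_indicators C :: ('x \<Rightarrow> 'k) set) \<le> card (orbit act C ` X)"
    using fin card finite_subset card_mono order_trans by metis+
qed

text \<open>The basic indicators below \<open>C\<close> span the indicators of the \<open>C\<close>-orbits, which are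
  independent and at least as many.\<close>
lemma basic_indicators_independent:
  assumes C: "finite C" "A \<subseteq> C"
  shows "\<not> fun_vs.dependent (basic_indicators C :: ('x \<Rightarrow> 'k::field) set)"
proof -
  let ?I = "(indicator :: 'x set \<Rightarrow> 'x \<Rightarrow> 'k) ` orbit act C ` X"
  have "{} \<notin> orbit act C ` X"
    using orbit_refl by blast
  then have "\<not> fun_vs.dependent ?I"
    using indicator_independent[OF disjoint_orbits] by blast
  moreover have "?I \<subseteq> fun_vs.span (basic_indicators C)"
    using indicator_orbit_in_span[OF C] by blast
  moreover have "card (basic_indicators C :: ('x \<Rightarrow> 'k) set) \<le> card ?I"
    using card_basic_indicators_le(2)[OF C] card_image[OF inj_on_subset[OF inj_indicator]]
    by (metis subset_UNIV)
  ultimately show ?thesis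
    using fun_vs.independent_if_card_le_independent card_basic_indicators_le(1)[OF C] by blast
qed

lemma basis_independent: "\<not> fun_vs.dependent (basis :: ('x \<Rightarrow> 'k::field) set)"
proof
  assume "fun_vs.dependent (basis :: ('x \<Rightarrow> 'k) set)"
  then obtain T u where T: "finite T" "T \<subseteq> (basis :: ('x \<Rightarrow> 'k) set)"
    "(\<Sum>v\<in>T. fscale (u v) v) = 0" "\<exists>v\<in>T. u v \<noteq> 0"
    unfolding fun_vs.dependent_explicit by blast
  have "\<exists>D. finite D \<and> A \<subseteq> D \<and> b \<in> basic_indicators D" if "b \<in> T" for b
  proof -
    obtain D y where "b = indicator (orbit act D y)" "finite D" "A \<subseteq> D" "y \<in> X" "basic D y"
      using \<open>b \<in> T\<close> T(2) unfolding basis_def by blast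
    then show ?thesis
      unfolding basic_indicators_def by blast
  qed
  then obtain Dof where Dof: "\<forall>b\<in>T. finite (Dof b) \<and> A \<subseteq> Dof b \<and> b \<in> basic_indicators (Dof b)"
    using finite_set_choice[OF T(1)] by meson
  define C where "C = A \<union> \<Union>(Dof ` T)"
  have C: "finite C" "A \<subseteq> C"
    using T(1) Dof finite_A by (auto simp: C_def)
  have "b \<in> basic_indicators C" if "b \<in> T" for b
  proof -
    have "Dof b \<subseteq> C"
      using that unfolding C_def by blast
    then show ?thesis
      using basic_indicators_mono Dof that by blast
  qed
  then have "fun_vs.dependent (basic_indicators C :: ('x \<Rightarrow> 'k) set)"
    unfolding fun_vs.dependent_explicit using T(1,3,4) by (intro exI[of _ T] exI[of _ u]) blast
  then show False
    using basic_indicators_independent[OF C] by blast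
qed

lemma indicator_orbit_fs_funs:
  assumes "finite D" "A \<subseteq> D" "y \<in> X"
  shows "(indicator (orbit act D y) :: 'x \<Rightarrow> 'k::zero_neq_one) \<in> fs_funs act X"
proof -
  have "fun_act act \<pi> (indicator (orbit act D y) :: 'x \<Rightarrow> 'k) = indicator (orbit act D y)"
    if "fixing D \<pi>" for \<pi>
    by (simp add: fun_act_indicator[OF fixing_aut[OF that]] orbit_act_fixing[OF that])
  then have "supports_fun act X D (indicator (orbit act D y) :: 'x \<Rightarrow> 'k)"
    unfolding supports_fun_def using act_image_X[OF assms(2)] by simp
  moreover have "(indicator (orbit act D y) :: 'x \<Rightarrow> 'k) x = 0" if "x \<notin> X" for x
    using that orbit_subset_X[OF assms(2,3)] by (auto simp: indicator_def)
  ultimately show ?thesis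
    unfolding fs_funs_def using assms(1) by blast
qed

lemma basis_subset_fs_funs: "(basis :: ('x \<Rightarrow> 'k::field) set) \<subseteq> fs_funs act X"
  unfolding basis_def using indicator_orbit_fs_funs by blast

lemma supports_fun_mono: "supports_fun act X S f \<Longrightarrow> S \<subseteq> T \<Longrightarrow> supports_fun act X T f"
  unfolding supports_fun_def using fixing_subset by blast

lemma subspace_fs_funs: "fun_vs.subspace (fs_funs act X :: ('x \<Rightarrow> 'k::field) set)"
proof (rule fun_vs.subspaceI)
  have "supports_fun act X A (0 :: 'x \<Rightarrow> 'k)"
    unfolding supports_fun_def fun_act_def using act_image_X[OF subset_refl] by simp
  then show "(0 :: 'x \<Rightarrow> 'k) \<in> fs_funs act X"
    unfolding fs_funs_def using finite_A by auto
next
  fix f g :: "'x \<Rightarrow> 'k" assume "f \<in> fs_funs act X" "g \<in> fs_funs act X"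
  then obtain S T where "finite S" "supports_fun act X S f" "finite T" "supports_fun act X T g"
    and zero: "\<forall>x. x \<notin> X \<longrightarrow> f x = 0" "\<forall>x. x \<notin> X \<longrightarrow> g x = 0"
    unfolding fs_funs_def by blast
  moreover from this have "supports_fun act X (S \<union> T) (f + g)"
    using supports_fun_mono[OF \<open>supports_fun act X S f\<close> Un_upper1]
      supports_fun_mono[OF \<open>supports_fun act X T g\<close> Un_upper2]
    unfolding supports_fun_def fun_act_def by simp
  moreover have "\<forall>x. x \<notin> X \<longrightarrow> (f + g) x = 0"
    using zero by simp
  ultimately show "f + g \<in> fs_funs act X"
    unfolding fs_funs_def by blast
next
  fix c :: 'k and f :: "'x \<Rightarrow> 'k" assume "f \<in> fs_funs act X"
  then obtain S where "finite S" "supports_fun act X S f" and zero: "\<forall>x. x \<notin> X \<longrightarrow> f x = 0"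
    unfolding fs_funs_def by blast
  moreover from this have "supports_fun act X S (fscale c f)"
    unfolding supports_fun_def fun_act_def fscale_def by simp
  moreover have "\<forall>x. x \<notin> X \<longrightarrow> fscale c f x = 0"
    using zero by (simp add: fscale_def)
  ultimately show "fscale c f \<in> fs_funs act X"
    unfolding fs_funs_def by blast
qed

lemma supports_fun_orbit_const:
  assumes "supports_fun act X C f" "y \<in> X" "z \<in> orbit act C y"
  shows "f z = f y"
proof -
  obtain \<pi> where \<pi>: "fixing C \<pi>" "z = act \<pi> y"
    using assms(3) unfolding orbit_def by blast
  then have "z \<in> X" "\<forall>x\<in>X. f (act (inv \<pi>) x) = f x"
    using assms(1,2) unfolding supports_fun_def fun_act_def by auto
  then show ?thesis
    using \<pi> fixing_aut by force
qed

lemma fs_fun_eq_orbit_sum: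
  fixes f :: "'x \<Rightarrow> 'k::field"
  assumes f: "f \<in> fs_funs act X" "supports_fun act X C f" and C: "finite C" "A \<subseteq> C"
  shows "f = (\<Sum>Ob\<in>orbit act C ` X. fscale (f (SOME y. y \<in> Ob)) (indicator Ob))"
proof
  fix x
  let ?Os = "orbit act C ` X"
  have fin: "finite ?Os"
    using finite_orbits[OF C(1)] .
  have sum: "(\<Sum>Ob\<in>?Os. fscale (f (SOME y. y \<in> Ob)) (indicator Ob)) x
      = (\<Sum>Ob\<in>?Os. f (SOME y. y \<in> Ob) * indicator Ob x)"
    by (rule sum_fscale_apply)
  show "f x = (\<Sum>Ob\<in>?Os. fscale (f (SOME y. y \<in> Ob)) (indicator Ob)) x"
  proof (cases "x \<in> X")
    case False
    have "indicator Ob x = (0 :: 'k)" if "Ob \<in> ?Os" for Ob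
    proof -
      obtain z where "z \<in> X" "Ob = orbit act C z"
        using \<open>Ob \<in> ?Os\<close> by blast
      then have "x \<notin> Ob"
        using False orbit_subset_X[OF C(2)] by blast
      then show ?thesis
        by simp
    qed
    then show ?thesis
      using sum f(1) False unfolding fs_funs_def by simp
  next
    case True
    let ?O = "orbit act C x"
    have O: "?O \<in> ?Os"
      using True by blast
    have "(SOME y. y \<in> ?O) \<in> ?O"
      using orbit_refl by (rule someI)
    then have "f (SOME y. y \<in> ?O) = f x"
      by (rule supports_fun_orbit_const[OF f(2) True])
    then have this_orbit: "f (SOME y. y \<in> ?O) * indicator ?O x = f x"
      using orbit_refl[of x C] by simp
    have "f (SOME y. y \<in> Ob) * indicator Ob x = 0" if Ob: "Ob \<in> ?Os - {?O}" for Ob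
    proof -
      obtain z where z: "Ob = orbit act C z"
        using Ob by blast
      have "x \<notin> Ob"
      proof
        assume "x \<in> Ob"
        then have "?O = Ob"
          unfolding z by (rule orbit_eq)
        then show False
          using Ob by blast
      qed
      then show ?thesis
        by simp
    qed
    then have "(\<Sum>Ob\<in>?Os - {?O}. f (SOME y. y \<in> Ob) * indicator Ob x) = 0"
      by (intro sum.neutral) blast
    then have "(\<Sum>Ob\<in>?Os. f (SOME y. y \<in> Ob) * indicator Ob x) = f x"
      using sum.remove[OF fin O, of "\<lambda>Ob. f (SOME y. y \<in> Ob) * indicator Ob x"] this_orbit by simp
    then show ?thesis
      using sum by simp
  qed
qed

lemma span_basis: "fun_vs.span (basis :: ('x \<Rightarrow> 'k::field) set) = fs_funs act X"
proof
  show "fun_vs.span basis \<subseteq> fs_funs act X"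
    using fun_vs.span_minimal[OF basis_subset_fs_funs subspace_fs_funs] .
  show "fs_funs act X \<subseteq> fun_vs.span (basis :: ('x \<Rightarrow> 'k) set)"
  proof
    fix f :: "'x \<Rightarrow> 'k" assume f: "f \<in> fs_funs act X"
    then obtain S where S: "finite S" "supports_fun act X S f"
      unfolding fs_funs_def by blast
    define C where "C = A \<union> S"
    have C: "finite C" "A \<subseteq> C" "supports_fun act X C f"
      using S finite_A supports_fun_mono[OF S(2)] by (auto simp: C_def)
    have "indicator Ob \<in> fun_vs.span (basis :: ('x \<Rightarrow> 'k) set)" if "Ob \<in> orbit act C ` X" for Ob
      using that indicator_orbit_in_span[OF C(1,2)]
        fun_vs.span_mono[OF basic_indicators_subset_basis[OF C(1)]] by blast
    then have "(\<Sum>Ob\<in>orbit act C ` X. fscale (f (SOME y. y \<in> Ob)) (indicator Ob))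
        \<in> fun_vs.span (basis :: ('x \<Rightarrow> 'k) set)"
      by (intro fun_vs.span_sum fun_vs.span_scale)
    then show "f \<in> fun_vs.span basis"
      using fs_fun_eq_orbit_sum[OF f C(3,1,2)] by simp
  qed
qed

lemma basis_fixing_image:
  assumes "fixing A \<pi>"
  shows "fun_act act \<pi> ` (basis :: ('x \<Rightarrow> 'k::field) set) = basis"
proof -
  have into: "fun_act act \<sigma> ` (basis :: ('x \<Rightarrow> 'k) set) \<subseteq> basis" if \<sigma>: "fixing A \<sigma>" for \<sigma>
  proof
    fix b assume "b \<in> fun_act act \<sigma> ` (basis :: ('x \<Rightarrow> 'k) set)"
    then obtain D y where D: "b = fun_act act \<sigma> (indicator (orbit act D y))"
      "finite D" "A \<subseteq> D" "y \<in> X" "basic D y"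
      unfolding basis_def by blast
    have aut: "aut \<sigma>"
      using \<sigma> fixing_aut by blast
    have "b = indicator (orbit act (\<sigma> ` D) (act \<sigma> y))"
      unfolding D(1) fun_act_indicator[OF aut] orbit_act[OF aut] ..
    moreover have "A \<subseteq> \<sigma> ` D"
      using D(3) fixing_image_eq[OF \<sigma> subset_refl] by blast
    moreover have "act \<sigma> y \<in> X"
      using act_mem_X[OF _ \<sigma> D(4)] by simp
    ultimately show "b \<in> basis"
      unfolding basis_def using D(2) basic_act[OF \<sigma> D(5)] by blast
  qed
  have "(basis :: ('x \<Rightarrow> 'k) set) \<subseteq> fun_act act \<pi> ` basis"
  proof
    fix b :: "'x \<Rightarrow> 'k" assume "b \<in> basis"
    then have "fun_act act (inv \<pi>) b \<in> basis"
      using into[OF fixing_inv[OF assms]] by blast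
    then show "b \<in> fun_act act \<pi> ` basis"
      using fun_act_inv_cancel[OF fixing_aut[OF assms], of b] by (metis image_eqI)
  qed
  then show ?thesis
    using into[OF assms] by blast
qed

end

section \<open>Definability of the basis\<close>

lemma aut_extends_nth:
  fixes L1 L2 :: "rat list"
  assumes L1: "sorted_wrt (<) L1" and L2: "sorted_wrt (<) L2" and len: "length L1 = length L2"
  obtains \<rho> where "aut \<rho>" "\<And>i. i < length L1 \<Longrightarrow> \<rho> (L1 ! i) = L2 ! i"
proof -
  have sorted: "sorted L1" and distinct: "distinct L1"
    using L1 by (simp_all add: strict_sorted_iff)
  define g where "g e = the (map_of (zip L1 L2) e)" for e
  have g: "g (L1 ! i) = L2 ! i" if "i < length L1" for i
    using map_of_zip_nth[OF len distinct] that len by (simp add: g_def)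
  have "g x < g y" if xy: "x \<in> set L1" "y \<in> set L1" "x < y" for x y
  proof -
    obtain i j where ij: "i < length L1" "L1 ! i = x" "j < length L1" "L1 ! j = y"
      using xy(1,2) by (metis in_set_conv_nth)
    have "i < j"
    proof (rule ccontr)
      assume "\<not> i < j"
      then have "L1 ! j \<le> L1 ! i"
        using sorted_nth_mono[OF sorted] ij(1) by simp
      then show False
        using xy(3) ij by simp
    qed
    then show ?thesis
      using sorted_wrt_nth_less[OF L2 \<open>i < j\<close>] g[OF ij(1)] g[OF ij(3)] ij len by simp
  qed
  then obtain \<rho> where "aut \<rho>" "\<forall>x\<in>set L1. \<rho> x = g x"
    using aut_extends_strict_mono[of "set L1" g] by blast
  then show ?thesis
    using that g nth_mem by simp
qed

definition order_pattern :: "rat set \<Rightarrow> rat set \<Rightarrow> (rat option \<times> bool) list" where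
  "order_pattern F D = map (\<lambda>e. (if e \<in> F then Some e else None, e \<in> D)) (sorted_list_of_set (F \<union> D))"

lemma order_pattern_eqD:
  assumes fin: "finite F" "finite D1" "finite D2" and eq: "order_pattern F D1 = order_pattern F D2"
  shows "\<exists>\<rho>. fixing F \<rho> \<and> \<rho> ` D1 = D2"
proof -
  define L1 where "L1 = sorted_list_of_set (F \<union> D1)"
  define L2 where "L2 = sorted_list_of_set (F \<union> D2)"
  define mark1 where "mark1 e = (if e \<in> F then Some e else None, e \<in> D1)" for e
  define mark2 where "mark2 e = (if e \<in> F then Some e else None, e \<in> D2)" for e
  have marks: "map mark1 L1 = map mark2 L2"
    using eq unfolding order_pattern_def L1_def L2_def mark1_def mark2_def .
  have len: "length L1 = length L2"
    using arg_cong[OF marks, of length] by simp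
  have mark: "mark1 (L1 ! i) = mark2 (L2 ! i)" if "i < length L1" for i
    using arg_cong[OF marks, of "\<lambda>l. l ! i"] that len by simp
  have L1: "set L1 = F \<union> D1" "sorted_wrt (<) L1"
    using fin by (simp_all add: L1_def)
  have L2: "set L2 = F \<union> D2" "sorted_wrt (<) L2"
    using fin by (simp_all add: L2_def)
  have index1: "\<exists>i<length L1. L1 ! i = e" if "e \<in> F \<union> D1" for e
    using that L1(1) in_set_conv_nth[of e L1] by blast
  obtain \<rho> where \<rho>: "aut \<rho>" and \<rho>_nth: "\<And>i. i < length L1 \<Longrightarrow> \<rho> (L1 ! i) = L2 ! i"
    using aut_extends_nth[OF L1(2) L2(2) len] by blast
  have "\<rho> e = e" if e: "e \<in> F" for e
  proof -
    obtain i where i: "i < length L1" "L1 ! i = e"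
      using index1 e by blast
    then have "mark2 (L2 ! i) = (Some e, e \<in> D1)"
      using mark[OF i(1)] e by (simp add: mark1_def)
    then have "L2 ! i = e"
      unfolding mark2_def by (simp split: if_splits)
    then show ?thesis
      using i(2) \<rho>_nth[OF i(1)] by simp
  qed
  then have "fixing F \<rho>"
    using \<rho>(1) by (simp add: fixing_def)
  moreover have "\<rho> ` D1 = D2"
  proof
    show "\<rho> ` D1 \<subseteq> D2"
    proof
      fix z assume "z \<in> \<rho> ` D1"
      then obtain e where e: "e \<in> D1" "z = \<rho> e"
        by blast
      then obtain i where i: "i < length L1" "L1 ! i = e"
        using index1 by blast
      then have "L2 ! i \<in> D2"
        using mark[OF i(1)] e(1) unfolding mark1_def mark2_def by simp
      then show "z \<in> D2"
        using e(2) i(2) \<rho>_nth[OF i(1)] by simp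
    qed
    show "D2 \<subseteq> \<rho> ` D1"
    proof
      fix z assume "z \<in> D2"
      then have "z \<in> set L2"
        using L2(1) by blast
      then obtain i where i: "i < length L1" "L2 ! i = z"
        using len in_set_conv_nth[of z L2] by auto
      then have "L1 ! i \<in> D1"
        using mark[OF i(1)] \<open>z \<in> D2\<close> unfolding mark1_def mark2_def by simp
      moreover have "\<rho> (L1 ! i) = z"
        using \<rho>_nth[OF i(1)] i(2) by simp
      ultimately show "z \<in> \<rho> ` D1"
        by blast
    qed
  qed
  ultimately show ?thesis
    by blast
qed

context definable_set
begin

lemma card_basic_le:
  assumes "basic D y"
  shows "card (D - A) \<le> card (supp y)"
proof -
  define f where "f c = Max {u\<in>supp y. u \<le> c}" for c
  have f: "f c \<in> supp y \<and> covers D (f c) c" if c: "c \<in> D - A" for c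
  proof -
    obtain t where "t \<in> supp y" "covers D t c"
      using assms c unfolding basic_def by blast
    then obtain ts where "ts \<in> supp y" "covers D ts c" "\<forall>u\<in>supp y. u \<le> c \<longrightarrow> u \<le> ts"
      using obtain_greatest_covering[OF finite_supp] by blast
    moreover from this have "f c = ts"
      unfolding f_def covers_def by (intro Max_eqI) auto
    ultimately show ?thesis
      by simp
  qed
  have above: "c1 < f c2" if "c1 \<in> D - A" "c2 \<in> D - A" "c1 < c2" for c1 c2
    using f[OF that(2)] that(1,3) unfolding covers_def by blast
  have below: "f c \<le> c" if "c \<in> D - A" for c
    using f[OF that] unfolding covers_def by blast
  have "inj_on f (D - A)"
  proof (rule inj_onI, rule ccontr)
    fix c1 c2 assume c: "c1 \<in> D - A" "c2 \<in> D - A" "f c1 = f c2" "c1 \<noteq> c2"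
    then consider "c1 < c2" | "c2 < c1"
      by linarith
    then show False
    proof cases
      case 1
      then show False
        using above[OF c(1,2) 1] below[OF c(1)] c(3) by linarith
    next
      case 2
      then show False
        using above[OF c(2,1) 2] below[OF c(2)] c(3) by linarith
    qed
  qed
  moreover have "f ` (D - A) \<subseteq> supp y"
    using f by blast
  ultimately show ?thesis
    using card_inj_on_le[OF _ _ finite_supp] by blast
qed

text \<open>A basic pair \<open>(D, y)\<close> is determined, up to automorphisms fixing \<open>A\<close>, by the
  \<open>A\<close>-orbit of \<open>y\<close> and the order pattern of \<open>D\<close>, transported back to the representative
  of that orbit, relative to \<open>A\<close> and the support of the representative.\<close>
definition basis_key :: "rat set \<Rightarrow> 'x \<Rightarrow> 'x set \<times> (rat option \<times> bool) list set" where
  "basis_key D y =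
     (orbit act A y,
      {order_pattern (A \<union> supp (orbit_rep (orbit act A y))) (inv \<pi> ` D) | \<pi>.
         fixing A \<pi> \<and> act \<pi> (orbit_rep (orbit act A y)) = y})"

definition patterns :: "'x set \<Rightarrow> (rat option \<times> bool) list set" where
  "patterns Ob =
     {xs. set xs \<subseteq> (Some ` (A \<union> supp (orbit_rep Ob)) \<union> {None}) \<times> UNIV
        \<and> length xs \<le> card (A \<union> supp (orbit_rep Ob)) + card A + card (supp (orbit_rep Ob))}"

lemma finite_patterns: "finite (patterns Ob)"
  unfolding patterns_def using finite_A
  by (intro finite_lists_length_le) auto

lemma basis_key_mem:
  assumes "finite D" "A \<subseteq> D" "y \<in> X" "basic D y"
  shows "basis_key D y \<in> Sigma (orbit act A ` X) (\<lambda>Ob. Pow (patterns Ob))"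
proof -
  define x where "x = orbit_rep (orbit act A y)"
  define F where "F = A \<union> supp x"
  have "order_pattern F (inv \<pi> ` D) \<in> patterns (orbit act A y)"
    if \<pi>: "fixing A \<pi>" "act \<pi> x = y" for \<pi>
  proof -
    have aut: "aut \<pi>"
      using \<pi> fixing_aut by blast
    have "card (inv \<pi> ` D) = card D"
      using card_image[OF inj_on_subset[OF aut_inj[OF aut_inv[OF aut]] subset_UNIV]] .
    also have "\<dots> \<le> card A + card (D - A)"
      using card_Un_le[of A "D - A"] Un_Diff_cancel[of A D] Un_absorb1[OF assms(2)] by simp
    also have "card (D - A) \<le> card (supp y)"
      using card_basic_le[OF assms(4)] .
    also have "supp y = \<pi> ` supp x"
      using supp_act[OF aut, of x] \<pi>(2) by simp
    then have "card (supp y) = card (supp x)"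
      using card_image[OF inj_on_subset[OF aut_inj[OF aut] subset_UNIV]] by simp
    finally have "card (inv \<pi> ` D) \<le> card A + card (supp x)"
      by simp
    moreover have "length (order_pattern F (inv \<pi> ` D)) = card (F \<union> inv \<pi> ` D)"
      unfolding order_pattern_def by simp
    ultimately have "length (order_pattern F (inv \<pi> ` D)) \<le> card F + card A + card (supp x)"
      using card_Un_le[of F "inv \<pi> ` D"] by linarith
    moreover have "set (order_pattern F (inv \<pi> ` D)) \<subseteq> (Some ` F \<union> {None}) \<times> UNIV"
      unfolding order_pattern_def by auto
    ultimately show ?thesis
      unfolding patterns_def F_def x_def by simp
  qed
  then have "snd (basis_key D y) \<in> Pow (patterns (orbit act A y))"
    unfolding basis_key_def x_def[symmetric] F_def[symmetric] snd_conv by blast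
  then show ?thesis
    using assms(3) by (simp add: basis_key_def)
qed

lemma basis_key_eqD:
  assumes fin: "finite D1" "finite D2" and y1: "y1 \<in> X" and key: "basis_key D1 y1 = basis_key D2 y2"
  shows "\<exists>\<sigma>. fixing A \<sigma> \<and> act \<sigma> y1 = y2 \<and> \<sigma> ` D1 = D2"
proof -
  define x where "x = orbit_rep (orbit act A y1)"
  define F where "F = A \<union> supp x"
  have same_rep: "orbit_rep (orbit act A y2) = x"
    using key by (simp add: basis_key_def x_def)
  obtain \<pi>1 where \<pi>1: "fixing A \<pi>1" "act \<pi>1 x = y1"
    using orbit_repE[OF y1] unfolding x_def by blast
  have "order_pattern F (inv \<pi>1 ` D1) \<in> snd (basis_key D1 y1)"
    unfolding basis_key_def x_def[symmetric] F_def snd_conv using \<pi>1 by blast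
  then have "order_pattern F (inv \<pi>1 ` D1) \<in> snd (basis_key D2 y2)"
    using key by simp
  then obtain \<pi>2 where \<pi>2: "fixing A \<pi>2" "act \<pi>2 x = y2"
    and pattern: "order_pattern F (inv \<pi>1 ` D1) = order_pattern F (inv \<pi>2 ` D2)"
    unfolding basis_key_def same_rep F_def by auto
  have a1: "aut \<pi>1" and a2: "aut \<pi>2"
    using \<pi>1 \<pi>2 fixing_aut by blast+
  obtain \<rho> where \<rho>: "fixing F \<rho>" "\<rho> ` inv \<pi>1 ` D1 = inv \<pi>2 ` D2"
    using order_pattern_eqD[OF _ _ _ pattern] finite_A fin by (auto simp: F_def)
  have a\<rho>: "aut \<rho>"
    using \<rho>(1) fixing_aut by blast
  define \<sigma> where "\<sigma> = \<pi>2 \<circ> \<rho> \<circ> inv \<pi>1"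
  have "fixing A \<sigma>"
    unfolding \<sigma>_def using \<pi>1(1) \<pi>2(1) fixing_subset[OF \<rho>(1)]
    by (intro fixing_comp fixing_inv) (auto simp: F_def)
  moreover have "act \<rho> x = x"
    using supp_agree[OF a\<rho> aut_id, of x] fixing_fixes[OF \<rho>(1)] by (simp add: F_def)
  then have "act \<sigma> y1 = y2"
    unfolding \<sigma>_def \<pi>1(2)[symmetric] \<pi>2(2)[symmetric] using a1 a2 a\<rho>
    by (simp add: act_comp aut_comp aut_inv)
  moreover have "\<sigma> ` D1 = D2"
    unfolding \<sigma>_def image_comp[symmetric] \<rho>(2) using a2 by (simp add: image_comp)
  ultimately show ?thesis
    by blast
qed

definition fun_orbit :: "('x \<Rightarrow> 'k) \<Rightarrow> ('x \<Rightarrow> 'k) set" where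
  "fun_orbit f = {fun_act act \<pi> f | \<pi>. fixing A \<pi>}"

lemma fun_orbit_fun_act:
  assumes \<sigma>: "fixing A \<sigma>"
  shows "fun_orbit (fun_act act \<sigma> f) = fun_orbit f"
proof -
  have aut: "aut \<sigma>"
    using \<sigma> fixing_aut by blast
  have "fun_act act \<pi> (fun_act act \<sigma> f) \<in> fun_orbit f" if "fixing A \<pi>" for \<pi>
    using that fun_act_comp[OF fixing_aut[OF that] aut] fixing_comp[OF that \<sigma>]
    unfolding fun_orbit_def by auto
  moreover have "fun_act act \<pi> f \<in> fun_orbit (fun_act act \<sigma> f)" if "fixing A \<pi>" for \<pi>
  proof -
    have "fun_act act (\<pi> \<circ> inv \<sigma>) (fun_act act \<sigma> f) = fun_act act (\<pi> \<circ> inv \<sigma> \<circ> \<sigma>) f"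
      by (rule fun_act_comp[OF aut_comp[OF fixing_aut[OF that] aut_inv[OF aut]] aut])
    moreover have "\<pi> \<circ> inv \<sigma> \<circ> \<sigma> = \<pi>"
      using aut by (simp add: o_assoc[symmetric])
    ultimately have "fun_act act \<pi> f = fun_act act (\<pi> \<circ> inv \<sigma>) (fun_act act \<sigma> f)"
      by simp
    then show ?thesis
      using fixing_comp[OF that fixing_inv[OF \<sigma>]] unfolding fun_orbit_def by blast
  qed
  ultimately show ?thesis
    unfolding fun_orbit_def by blast
qed

lemma finite_basis_orbits: "finite (fun_orbit ` (basis :: ('x \<Rightarrow> 'k::field) set))"
proof -
  define R where "R = {(D, y). finite D \<and> A \<subseteq> D \<and> y \<in> X \<and> basic D y}"
  define ind where "ind p = (indicator (orbit act (fst p) (snd p)) :: 'x \<Rightarrow> 'k)" for p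
  have basis: "basis = ind ` R"
  proof
    show "basis \<subseteq> ind ` R"
    proof
      fix b assume "b \<in> (basis :: ('x \<Rightarrow> 'k) set)"
      then obtain D y where "b = indicator (orbit act D y)" "(D, y) \<in> R"
        unfolding basis_def R_def by blast
      then show "b \<in> ind ` R"
        unfolding ind_def by force
    qed
    show "ind ` R \<subseteq> basis"
      unfolding basis_def R_def ind_def by force
  qed
  have keys: "finite (case_prod basis_key ` R)"
  proof (rule finite_subset)
    show "case_prod basis_key ` R \<subseteq> Sigma (orbit act A ` X) (\<lambda>Ob. Pow (patterns Ob))"
    proof
      fix k assume "k \<in> case_prod basis_key ` R"
      then obtain D y where "k = basis_key D y" "finite D" "A \<subseteq> D" "y \<in> X" "basic D y"
        unfolding R_def by auto
      then show "k \<in> Sigma (orbit act A ` X) (\<lambda>Ob. Pow (patterns Ob))"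
        using basis_key_mem by blast
    qed
    show "finite (Sigma (orbit act A ` X) (\<lambda>Ob. Pow (patterns Ob)))"
      using finite_A_orbits finite_patterns by blast
  qed
  have "(fun_orbit \<circ> ind) p1 = (fun_orbit \<circ> ind) p2"
    if R: "p1 \<in> R" "p2 \<in> R" and key: "case_prod basis_key p1 = case_prod basis_key p2" for p1 p2
  proof -
    obtain D1 y1 D2 y2 where p: "p1 = (D1, y1)" "p2 = (D2, y2)"
      by fastforce
    then obtain \<sigma> where \<sigma>: "fixing A \<sigma>" "act \<sigma> y1 = y2" "\<sigma> ` D1 = D2"
      using basis_key_eqD[of D1 D2 y1 y2] R key unfolding R_def by auto
    have "fun_act act \<sigma> (ind p1) = ind p2"
      unfolding p ind_def using \<sigma>
      by (simp add: fun_act_indicator[OF fixing_aut[OF \<sigma>(1)]] orbit_act[OF fixing_aut[OF \<sigma>(1)]])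
    then show ?thesis
      using fun_orbit_fun_act[OF \<sigma>(1), of "ind p1"] by simp
  qed
  then have "finite ((fun_orbit \<circ> ind) ` R)"
    by (rule finite_image_factor(1)[OF keys])
  then show ?thesis
    unfolding basis image_comp .
qed

end

theorem mainTheorem11:
  fixes act :: "(rat \<Rightarrow> rat) \<Rightarrow> 'x \<Rightarrow> 'x"
    and X :: "'x set"
  assumes "fm_universe act"
    and "definable act X"
  shows "\<exists>B :: ('x \<Rightarrow> 'k::field) set.
           B \<subseteq> fs_funs act X \<and>
           definable_funset act X B \<and>
           \<not> module.dependent fscale B \<and>
           module.span fscale B = fs_funs act X"
proof -
  obtain A where A: "finite A" "supports_set act A X" "finite (orbit act A ` X)"
    using assms(2) unfolding definable_def by blast
  interpret definable_set act X A
    using assms(1) A by unfold_locales (auto simp: fm_action_def)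
  have "definable_funset act X (basis :: ('x \<Rightarrow> 'k) set)"
    unfolding definable_funset_def
  proof (intro exI[of _ A] conjI allI impI)
    fix \<pi> assume \<pi>: "fixing A \<pi>"
    show "act \<pi> ` X = X"
      by (rule act_image_X[OF subset_refl \<pi>])
    show "fun_act act \<pi> ` (basis :: ('x \<Rightarrow> 'k) set) = basis"
      by (rule basis_fixing_image[OF \<pi>])
  next
    show "finite ((\<lambda>f. {fun_act act \<pi> f |\<pi>. fixing A \<pi>}) ` (basis :: ('x \<Rightarrow> 'k) set))"
      using finite_basis_orbits unfolding fun_orbit_def .
  qed (rule A(1))
  then show ?thesis
    using basis_subset_fs_funs basis_independent span_basis by blast
qed

end
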